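(* Let $\sigma\colon\Sigma\to\Sigma$ be a topologically mixing two-sided subshift of finite type with a Gibbs measure $\mu$ of a H\"older potential, $0<\theta<1$, $f\colon\Sigma\to\mathbb R$ Lipschitz w.r.t. $d_\theta$ with $\int f\,d\mu=0$, and $F(x,r)=(\sigma x,r+f(x))$. If $F$ is accessible, then $f$ is not cohomologous to zero, i.e. there is no measurable $w\colon\Sigma\to\mathbb R$ with $f=w\circ\sigma-w$ $\mu$-almost everywhere.
   Context: $d_\theta(x,y)=\theta^{\max\{j:\ x_i=y_i\ \forall|i|<j\}}$, $f_n=\sum_{i<n}f\circ\sigma^i$. $(y,s)\in W^s(x,r)$ iff $y_i=x_i$ for all sufficiently large $i$ and $s-r=\lim_n(f_n(x)-f_n(y))$; $(y,s)\in W^u(x,r)$ iff $y_i=x_i$ for all sufficiently negative $i$ and $s-r=\lim_n(f_n(\sigma^{-n}y)-f_n(\sigma^{-n}x))$; $F$ is accessible if any two points of $\Sigma\times\mathbb R$ are joined by a finite chain of points each in $W^s$ or $W^u$ of the previous one. *)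

theory Defs
  imports "HOL-Probability.Probability"
begin

type_synonym seq = "int \<Rightarrow> nat"

definition SFT :: "nat \<Rightarrow> (nat \<Rightarrow> nat \<Rightarrow> bool) \<Rightarrow> seq set" where
  "SFT k A = {x. \<forall>i. x i < k \<and> A (x i) (x (i + 1))}"

definition shift :: "seq \<Rightarrow> seq" where
  "shift x = (\<lambda>i. x (i + 1))"

definition shiftn :: "int \<Rightarrow> seq \<Rightarrow> seq" where
  "shiftn n x = (\<lambda>i. x (i + n))"

text \<open>Cylinder sets; they form a base of the d_theta topology and generate the Borel sets of Sigma.\<close>
definition cyl :: "seq set \<Rightarrow> int \<Rightarrow> int \<Rightarrow> seq \<Rightarrow> seq set" where
  "cyl S m n w = {y \<in> S. \<forall>i. m \<le> i \<and> i \<le> n \<longrightarrow> y i = w i}"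

definition cylinders :: "seq set \<Rightarrow> seq set set" where
  "cylinders S = {cyl S m n w | m n w. True}"

text \<open>Topological mixing, stated on the base of symmetric cylinders [-m,m].\<close>
definition topologically_mixing :: "seq set \<Rightarrow> bool" where
  "topologically_mixing S \<longleftrightarrow>
     (\<forall>x\<in>S. \<forall>y\<in>S. \<forall>m::int. \<exists>N::nat. \<forall>n\<ge>N.
        \<exists>z\<in>S. (\<forall>i. \<bar>i\<bar> \<le> m \<longrightarrow> z i = x i) \<and>
               (\<forall>i. \<bar>i\<bar> \<le> m \<longrightarrow> shiftn (int n) z i = y i))"

definition d_theta :: "real \<Rightarrow> seq \<Rightarrow> seq \<Rightarrow> real" where
  "d_theta \<theta> x y = (if x = y then 0
      else \<theta> ^ (GREATEST j::nat. \<forall>i::int. \<bar>i\<bar> < int j \<longrightarrow> x i = y i))"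

definition lipschitz_dtheta :: "seq set \<Rightarrow> real \<Rightarrow> (seq \<Rightarrow> real) \<Rightarrow> bool" where
  "lipschitz_dtheta S \<theta> g \<longleftrightarrow> (\<exists>C. \<forall>x\<in>S. \<forall>y\<in>S. \<bar>g x - g y\<bar> \<le> C * d_theta \<theta> x y)"

text \<open>Hoelder potential: Hoelder w.r.t. some d_theta', equivalently Lipschitz w.r.t. some d_theta'.\<close>
definition holder :: "seq set \<Rightarrow> (seq \<Rightarrow> real) \<Rightarrow> bool" where
  "holder S \<phi> \<longleftrightarrow> (\<exists>\<theta>' \<alpha> C. 0 < \<theta>' \<and> \<theta>' < 1 \<and> 0 < \<alpha> \<and> \<alpha> \<le> 1 \<and>
      (\<forall>x\<in>S. \<forall>y\<in>S. \<bar>\<phi> x - \<phi> y\<bar> \<le> C * d_theta \<theta>' x y powr \<alpha>))"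

definition birkhoff :: "(seq \<Rightarrow> real) \<Rightarrow> nat \<Rightarrow> seq \<Rightarrow> real" where
  "birkhoff g n x = (\<Sum>i<n. g ((shift ^^ i) x))"

definition gibbs_measure :: "seq set \<Rightarrow> seq measure \<Rightarrow> bool" where
  "gibbs_measure S \<mu> \<longleftrightarrow>
     prob_space \<mu> \<and> space \<mu> = S \<and> sets \<mu> = sigma_sets S (cylinders S) \<and>
     (\<forall>B\<in>sets \<mu>. shift -` B \<inter> S \<in> sets \<mu> \<and> measure \<mu> (shift -` B \<inter> S) = measure \<mu> B) \<and>
     (\<exists>\<phi> P c1 c2. holder S \<phi> \<and> 0 < c1 \<and> 0 < c2 \<and>
        (\<forall>x\<in>S. \<forall>n\<ge>1.
           c1 * exp (- real n * P + birkhoff \<phi> n x) \<le> measure \<mu> (cyl S 0 (int n - 1) x) \<and>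
           measure \<mu> (cyl S 0 (int n - 1) x) \<le> c2 * exp (- real n * P + birkhoff \<phi> n x)))"

definition Ws :: "seq set \<Rightarrow> (seq \<Rightarrow> real) \<Rightarrow> seq \<times> real \<Rightarrow> (seq \<times> real) set" where
  "Ws S f p = {(y, s). y \<in> S \<and> (\<exists>N. \<forall>i\<ge>N. y i = fst p i) \<and>
      (\<lambda>n. birkhoff f n (fst p) - birkhoff f n y) \<longlonglongrightarrow> s - snd p}"

definition Wu :: "seq set \<Rightarrow> (seq \<Rightarrow> real) \<Rightarrow> seq \<times> real \<Rightarrow> (seq \<times> real) set" where
  "Wu S f p = {(y, s). y \<in> S \<and> (\<exists>N. \<forall>i\<le>N. y i = fst p i) \<and>
      (\<lambda>n. birkhoff f n (shiftn (- int n) y) - birkhoff f n (shiftn (- int n) (fst p)))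
         \<longlonglongrightarrow> s - snd p}"

definition accessible :: "seq set \<Rightarrow> (seq \<Rightarrow> real) \<Rightarrow> bool" where
  "accessible S f \<longleftrightarrow>
     (\<forall>p\<in>S \<times> UNIV. \<forall>q\<in>S \<times> UNIV. (\<lambda>a b. b \<in> Ws S f a \<union> Wu S f a)\<^sup>*\<^sup>* p q)"

end

theory Submission
  imports Defs
begin

text \<open>Suppose \<open>f = w \<circ> shift - w\<close> almost everywhere with \<open>w\<close> measurable. If \<open>x\<close> and
  \<open>y\<close> differ in finitely many coordinates, the sum of \<open>f (\<sigma>\<^sup>i x) - f (\<sigma>\<^sup>i y)\<close> over
  \<open>-n \<le> i < n\<close> telescopes to a combination of values of \<open>w\<close> at \<open>\<sigma>\<^sup>n\<close> and \<open>\<sigma>\<^sup>-\<^sup>n\<close> of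
  \<open>x\<close> and \<open>y\<close>. Replacing the central block of points near \<open>x\<close> by that of \<open>y\<close> is nonsingular
  for the Gibbs measure (bounded distortion), so by Lusin's theorem these values nearly agree
  for many such pairs of points; with the Lipschitz continuity of \<open>f\<close> this shows that the
  two-sided sum for \<open>x, y\<close> vanishes in the limit.

  Using mixing, connect every point to a fixed point \<open>p\<close> outside a large window \<open>[-K, K]\<close>.
  For two such regularised points the forward sum of the differences converges. Along a
  stable leg from \<open>(x, r)\<close> to \<open>(y, s)\<close> it tends to \<open>s - r\<close> as \<open>K\<close> grows; along an unstable
  leg the backward sum does, and it has the same limit as the forward sum because the
  two-sided sum vanishes. Hence along an accessibility chain from \<open>(p, 0)\<close> to \<open>(p, 1)\<close> the
  limit would be \<open>1\<close>, while for \<open>x = y = p\<close> it is \<open>0\<close>.\<close>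

section \<open>Shifts and the metric\<close>

lemma shiftn_shiftn [simp]: "shiftn a (shiftn b x) = shiftn (a + b) x"
  by (simp add: shiftn_def add.commute add.left_commute)

lemma shiftn_0 [simp]: "shiftn 0 x = x"
  by (simp add: shiftn_def)

lemma shiftn_apply: "shiftn n x i = x (i + n)"
  by (simp add: shiftn_def)

lemma shiftn_in_SFT: "x \<in> SFT k A \<Longrightarrow> shiftn n x \<in> SFT k A"
  unfolding SFT_def shiftn_def by (auto, metis add.commute add.left_commute)

lemma shift_eq_shiftn: "shift = shiftn 1"
  by (simp add: fun_eq_iff shift_def shiftn_def)

lemma funpow_shift: "(shift ^^ i) x = shiftn (int i) x"
  by (induction i arbitrary: x) (auto simp: shift_eq_shiftn add.commute)

lemma birkhoff_eq_sum: "birkhoff g n x = (\<Sum>i<n. g (shiftn (int i) x))"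
  by (simp add: birkhoff_def funpow_shift)

lemma birkhoff_shiftn_neg: "birkhoff g n (shiftn (- int n) x) = (\<Sum>i<n. g (shiftn (- int i - 1) x))"
proof -
  have "birkhoff g n (shiftn (- int n) x) = (\<Sum>i<n. (\<lambda>j. g (shiftn (- int j - 1) x)) (n - Suc i))"
    unfolding birkhoff_eq_sum by (rule sum.cong) (auto simp: of_nat_diff)
  also have "\<dots> = (\<Sum>i<n. g (shiftn (- int i - 1) x))" by (rule sum.nat_diff_reindex)
  finally show ?thesis .
qed

lemma d_theta_nonneg: "0 \<le> \<theta> \<Longrightarrow> 0 \<le> d_theta \<theta> x y"
  by (simp add: d_theta_def)

lemma d_theta_le_power:
  assumes "0 \<le> \<theta>" "\<theta> \<le> 1" and agree: "\<forall>j. \<bar>j\<bar> < int r \<longrightarrow> x j = y j"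
  shows "d_theta \<theta> x y \<le> \<theta> ^ r"
proof (cases "x = y")
  case True
  then show ?thesis using assms by (simp add: d_theta_def)
next
  case False
  then obtain i0 where i0: "x i0 \<noteq> y i0" by auto
  let ?P = "\<lambda>j::nat. \<forall>i::int. \<bar>i\<bar> < int j \<longrightarrow> x i = y i"
  have bound: "\<forall>j. ?P j \<longrightarrow> j \<le> nat \<bar>i0\<bar>"
    using i0 by (metis int_nat_eq abs_ge_zero not_le of_nat_less_iff)
  have "r \<le> (GREATEST j. ?P j)"
    by (rule Greatest_le_nat[of ?P r "nat \<bar>i0\<bar>"]) (use agree bound in auto)
  then have "\<theta> ^ (GREATEST j. ?P j) \<le> \<theta> ^ r"
    using assms by (simp add: power_decreasing)
  then show ?thesis using False by (simp add: d_theta_def)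
qed

lemma holder_geometric_bound:
  assumes "holder S \<phi>"
  obtains q C where "0 < q" "q < 1" "0 \<le> C"
    "\<And>x y r. x \<in> S \<Longrightarrow> y \<in> S \<Longrightarrow> \<forall>j. \<bar>j\<bar> < int r \<longrightarrow> x j = y j \<Longrightarrow> \<bar>\<phi> x - \<phi> y\<bar> \<le> C * q ^ r"
proof -
  obtain t a C where t: "0 < t" "t < 1" "0 < a" "a \<le> 1" and
    HC: "\<forall>x\<in>S. \<forall>y\<in>S. \<bar>\<phi> x - \<phi> y\<bar> \<le> C * d_theta t x y powr a"
    using assms unfolding holder_def by blast
  define q where "q = t powr a"
  have "t powr a < 1 powr a" using t by (intro powr_less_mono2) auto
  then have q: "0 < q" "q < 1" using t by (auto simp: q_def)
  have "\<bar>\<phi> x - \<phi> y\<bar> \<le> max C 0 * q ^ r"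
    if xy: "x \<in> S" "y \<in> S" "\<forall>j. \<bar>j\<bar> < int r \<longrightarrow> x j = y j" for x y r
  proof -
    have "d_theta t x y powr a \<le> (t ^ r) powr a"
      using d_theta_le_power[of t r x y] d_theta_nonneg[of t x y] t xy by (intro powr_mono2) auto
    also have "(t ^ r) powr a = q ^ r" using t
      by (simp add: q_def powr_realpow[symmetric] powr_powr powr_power mult.commute)
    finally have dq: "d_theta t x y powr a \<le> q ^ r" .
    have "\<bar>\<phi> x - \<phi> y\<bar> \<le> C * d_theta t x y powr a" using HC xy by auto
    also have "\<dots> \<le> max C 0 * d_theta t x y powr a" by (intro mult_right_mono) auto
    also have "\<dots> \<le> max C 0 * q ^ r" using dq by (intro mult_left_mono) auto
    finally show ?thesis .
  qed
  then show ?thesis using q that[of q "max C 0"] by auto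
qed

lemma sum_geometric_le: "0 \<le> (q::real) \<Longrightarrow> q < 1 \<Longrightarrow> (\<Sum>i<n. q ^ i) \<le> 1 / (1 - q)"
  by (simp add: sum_gp_strict divide_right_mono)

lemma sum_two_sided_geometric_le:
  fixes q :: real
  assumes q: "0 \<le> q" "q < 1"
  shows "(\<Sum>i<n. q ^ nat \<bar>int i - int c\<bar>) \<le> 2 / (1 - q)"
proof -
  let ?g = "\<lambda>i. q ^ nat \<bar>int i - int c\<bar>"
  have "(\<Sum>i<n. ?g i) \<le> (\<Sum>i<c+n. ?g i)" using q by (intro sum_mono2) auto
  also have "(\<Sum>i<c+n. ?g i) = (\<Sum>i<c. ?g i) + (\<Sum>i=c..<c+n. ?g i)"
    by (metis add.commute atLeast0LessThan le_add1 sum.atLeastLessThan_concat zero_le)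
  also have "(\<Sum>i<c. ?g i) = (\<Sum>i<c. q ^ Suc i)"
  proof -
    have "(\<Sum>i<c. ?g i) = (\<Sum>i<c. (\<lambda>j. q ^ Suc j) (c - Suc i))"
      by (rule sum.cong) (auto simp: Suc_diff_Suc nat_diff_distrib)
    also have "\<dots> = (\<Sum>i<c. q ^ Suc i)" by (rule sum.nat_diff_reindex)
    finally show ?thesis .
  qed
  also have "(\<Sum>i=c..<c+n. ?g i) = (\<Sum>i<n. q ^ i)"
  proof -
    have "(\<Sum>i=c..<c+n. ?g i) = (\<Sum>i=0+c..<n+c. ?g i)" by (simp add: add.commute)
    also have "\<dots> = (\<Sum>i=0..<n. ?g (i + c))" by (rule sum.shift_bounds_nat_ivl)
    also have "\<dots> = (\<Sum>i<n. q ^ i)" by (simp add: lessThan_atLeast0)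
    finally show ?thesis .
  qed
  also have "(\<Sum>i<c. q ^ Suc i) = q * (\<Sum>i<c. q ^ i)" by (simp add: sum_distrib_left)
  also have "q * (\<Sum>i<c. q ^ i) + (\<Sum>i<n. q ^ i) \<le> 1 * (1 / (1 - q)) + 1 / (1 - q)"
    using q sum_geometric_le[OF q] by (intro add_mono mult_mono) (auto intro: sum_nonneg)
  finally show ?thesis by simp
qed

lemma birkhoff_diff_le_of_agree_outside:
  fixes \<phi> :: "seq \<Rightarrow> real"
  assumes q: "0 < q" "q < 1" "0 \<le> C"
    and \<phi>: "\<And>x y r. x \<in> SFT k A \<Longrightarrow> y \<in> SFT k A \<Longrightarrow> \<forall>j. \<bar>j\<bar> < int r \<longrightarrow> x j = y j \<Longrightarrow>
      \<bar>\<phi> x - \<phi> y\<bar> \<le> C * q ^ r"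
    and u: "u \<in> SFT k A" "u' \<in> SFT k A"
    and agree: "\<forall>i. int L < \<bar>i - int c\<bar> \<longrightarrow> u i = u' i"
  shows "\<bar>birkhoff \<phi> n u' - birkhoff \<phi> n u\<bar> \<le> C / q ^ L * (2 / (1 - q))"
proof -
  have each: "\<bar>\<phi> (shiftn (int i) u') - \<phi> (shiftn (int i) u)\<bar> \<le> C / q ^ L * q ^ nat \<bar>int i - int c\<bar>"
    for i
  proof -
    define r where "r = nat (\<bar>int i - int c\<bar> - int L)"
    have "\<forall>j. \<bar>j\<bar> < int r \<longrightarrow> shiftn (int i) u' j = shiftn (int i) u j"
    proof (intro allI impI)
      fix j assume "\<bar>j\<bar> < int r"
      then have "int L < \<bar>j + int i - int c\<bar>" by (simp add: r_def split: if_splits; arith)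
      then show "shiftn (int i) u' j = shiftn (int i) u j"
        using agree by (auto simp: shiftn_apply algebra_simps)
    qed
    then have "\<bar>\<phi> (shiftn (int i) u') - \<phi> (shiftn (int i) u)\<bar> \<le> C * q ^ r"
      using \<phi> u shiftn_in_SFT by blast
    also have "q ^ r \<le> q ^ nat \<bar>int i - int c\<bar> / q ^ L"
    proof -
      have "q ^ r * q ^ L = q ^ (r + L)" by (simp add: power_add)
      also have "\<dots> \<le> q ^ nat \<bar>int i - int c\<bar>" using q by (intro power_decreasing) (auto simp: r_def)
      finally show ?thesis using q by (simp add: field_simps)
    qed
    finally show ?thesis using q by (simp add: mult_left_mono)
  qed
  have "\<bar>birkhoff \<phi> n u' - birkhoff \<phi> n u\<bar> = \<bar>\<Sum>i<n. \<phi> (shiftn (int i) u') - \<phi> (shiftn (int i) u)\<bar>"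
    by (simp add: birkhoff_eq_sum sum_subtractf)
  also have "\<dots> \<le> (\<Sum>i<n. C / q ^ L * q ^ nat \<bar>int i - int c\<bar>)"
    by (rule order_trans[OF sum_abs sum_mono]) (rule each)
  also have "\<dots> = C / q ^ L * (\<Sum>i<n. q ^ nat \<bar>int i - int c\<bar>)"
    by (simp add: sum_distrib_left)
  also have "\<dots> \<le> C / q ^ L * (2 / (1 - q))"
    using sum_two_sided_geometric_le[where n=n and c=c] q by (intro mult_left_mono) auto
  finally show ?thesis .
qed

lemma sum_small_of_two_sided_decay:
  fixes \<theta> C \<epsilon> :: real and N :: nat
  assumes \<theta>: "0 < \<theta>" "\<theta> < 1" and C: "0 \<le> C" and \<epsilon>: "0 < \<epsilon>"
  obtains K0 where "\<And>K e n. K0 \<le> K \<Longrightarrow> (\<And>i. i \<le> K \<Longrightarrow> \<bar>e i\<bar> \<le> C * \<theta> ^ (K - i)) \<Longrightarrow>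
    (\<And>i. N \<le> i \<Longrightarrow> \<bar>e i\<bar> \<le> C * \<theta> ^ (i - N)) \<Longrightarrow> \<bar>\<Sum>i<n. e i\<bar> \<le> \<epsilon>"
proof -
  obtain J where J: "\<theta> ^ J < \<epsilon> * (1 - \<theta>) / (2 * C + 1)"
    using real_arch_pow_inv[of "\<epsilon> * (1 - \<theta>) / (2 * C + 1)" \<theta>] \<theta> C \<epsilon> by auto
  define T where "T = N + J"
  have small: "C * \<theta> ^ J * (2 / (1 - \<theta>)) \<le> \<epsilon>"
  proof -
    have "2 * C * \<theta> ^ J \<le> \<theta> ^ J * (2 * C + 1)" using \<theta> by (simp add: algebra_simps)
    also have "\<dots> \<le> \<epsilon> * (1 - \<theta>)"
      using J C by (simp add: pos_less_divide_eq add_pos_nonneg)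
    finally show ?thesis using \<theta> by (simp add: field_simps)
  qed
  show ?thesis
  proof (rule that)
    fix K n and e :: "nat \<Rightarrow> real"
    assume K: "T + J \<le> K" and e1: "\<And>i. i \<le> K \<Longrightarrow> \<bar>e i\<bar> \<le> C * \<theta> ^ (K - i)"
      and e2: "\<And>i. N \<le> i \<Longrightarrow> \<bar>e i\<bar> \<le> C * \<theta> ^ (i - N)"
    have e: "\<bar>e i\<bar> \<le> C * \<theta> ^ J * \<theta> ^ nat \<bar>int i - int T\<bar>" for i
    proof (cases "i < T")
      case True
      have "\<bar>e i\<bar> \<le> C * \<theta> ^ (K - i)" using e1 True K by auto
      also have "\<theta> ^ (K - i) \<le> \<theta> ^ (J + nat \<bar>int i - int T\<bar>)"
        using \<theta> True K by (intro power_decreasing) auto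
      finally show ?thesis using C by (simp add: power_add mult.assoc mult_left_mono)
    next
      case False
      then have "i - N = J + nat \<bar>int i - int T\<bar>" "N \<le> i" by (auto simp: T_def)
      then show ?thesis using e2[of i] by (simp add: power_add mult.assoc)
    qed
    have "\<bar>\<Sum>i<n. e i\<bar> \<le> (\<Sum>i<n. C * \<theta> ^ J * \<theta> ^ nat \<bar>int i - int T\<bar>)"
      by (rule order_trans[OF sum_abs sum_mono]) (rule e)
    also have "\<dots> = C * \<theta> ^ J * (\<Sum>i<n. \<theta> ^ nat \<bar>int i - int T\<bar>)" by (simp add: sum_distrib_left)
    also have "\<dots> \<le> C * \<theta> ^ J * (2 / (1 - \<theta>))"
      using sum_two_sided_geometric_le[where q=\<theta> and n=n and c=T] \<theta> C by (intro mult_left_mono) auto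
    finally show "\<bar>\<Sum>i<n. e i\<bar> \<le> \<epsilon>" using small by linarith
  qed
qed

section \<open>Subshifts of finite type and windowed sets\<close>

definition glue :: "int \<Rightarrow> seq \<Rightarrow> seq \<Rightarrow> seq" where
  "glue c x y = (\<lambda>i. if i \<le> c then x i else y i)"

definition replace_center :: "nat \<Rightarrow> seq \<Rightarrow> seq \<Rightarrow> seq" where
  "replace_center L c z = (\<lambda>i. if \<bar>i\<bar> \<le> int L then c i else z i)"

definition homoclinic :: "seq \<Rightarrow> seq \<Rightarrow> bool" where
  "homoclinic x y \<longleftrightarrow> (\<exists>L::nat. \<forall>i. int L < \<bar>i\<bar> \<longrightarrow> x i = y i)"

locale sft =
  fixes k :: nat and A :: "nat \<Rightarrow> nat \<Rightarrow> bool"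
begin

abbreviation S :: "seq set" where "S \<equiv> SFT k A"

lemma glue_in_S:
  assumes "x \<in> S" "y \<in> S" "x c = y c"
  shows "glue c x y \<in> S"
  unfolding SFT_def mem_Collect_eq
proof
  fix i
  have "x i < k \<and> A (x i) (x (i + 1))" "y i < k \<and> A (y i) (y (i + 1))"
    using assms(1,2) by (auto simp: SFT_def)
  then show "glue c x y i < k \<and> A (glue c x y i) (glue c x y (i + 1))"
    using assms(3) by (cases "i = c") (auto simp: glue_def)
qed

lemma replace_center_in_S:
  assumes "c \<in> S" "z \<in> S" "c (int L + 1) = z (int L + 1)" "z (- int L - 1) = c (- int L - 1)"
  shows "replace_center L c z \<in> S"
proof -
  have "replace_center L c z = glue (- int L - 1) z (glue (int L + 1) c z)"
  proof
    fix i
    show "replace_center L c z i = glue (- int L - 1) z (glue (int L + 1) c z) i"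
      using assms(3,4) by (cases "i = int L + 1") (auto simp: replace_center_def glue_def)
  qed
  also have "\<dots> \<in> S"
    using assms by (intro glue_in_S) (auto simp: glue_def)
  finally show ?thesis .
qed

text \<open>Mixing makes one transition time \<open>M\<close> work for all pairs of symbols, since there are
  only finitely many of them.\<close>

lemma mixing_connecting_time:
  assumes mix: "topologically_mixing S"
  obtains M where "1 \<le> M" "\<And>x y i j. x \<in> S \<Longrightarrow> y \<in> S \<Longrightarrow> \<exists>z\<in>S. z 0 = x i \<and> z (int M) = y j"
proof -
  define Sym where "Sym = (\<lambda>x. x 0) ` S"
  have finSym: "finite Sym"
    by (rule finite_subset[of _ "{..<k}"]) (auto simp: Sym_def SFT_def)
  have "\<exists>N. \<forall>n\<ge>N. \<exists>z\<in>S. z 0 = s \<and> z (int n) = t" if st: "s \<in> Sym" "t \<in> Sym" for s t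
  proof -
    obtain x y where xy: "x \<in> S" "y \<in> S" "s = x 0" "t = y 0" using st by (auto simp: Sym_def)
    have "\<forall>m::int. \<exists>N. \<forall>n\<ge>N. \<exists>z\<in>S. (\<forall>i. \<bar>i\<bar> \<le> m \<longrightarrow> z i = x i) \<and>
        (\<forall>i. \<bar>i\<bar> \<le> m \<longrightarrow> shiftn (int n) z i = y i)"
      using mix xy unfolding topologically_mixing_def by blast
    then obtain N where "\<forall>n\<ge>N. \<exists>z\<in>S. (\<forall>i. \<bar>i\<bar> \<le> 0 \<longrightarrow> z i = x i) \<and>
        (\<forall>i. \<bar>i\<bar> \<le> 0 \<longrightarrow> shiftn (int n) z i = y i)"
      by (rule allE[of _ 0]) blast
    then show ?thesis using xy by (auto simp: shiftn_apply)
  qed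
  then obtain Np where Np: "\<And>s t n. s \<in> Sym \<Longrightarrow> t \<in> Sym \<Longrightarrow> Np s t \<le> n \<Longrightarrow>
      \<exists>z\<in>S. z 0 = s \<and> z (int n) = t"
    by metis
  define M where "M = 1 + (\<Sum>q\<in>Sym \<times> Sym. Np (fst q) (snd q))"
  show ?thesis
  proof (rule that)
    show "1 \<le> M" by (simp add: M_def)
    fix x y i j assume "x \<in> S" "y \<in> S"
    then have "shiftn i x \<in> S" "shiftn j y \<in> S" by (auto intro: shiftn_in_SFT)
    moreover have "x i = shiftn i x 0" "y j = shiftn j y 0" by (simp_all add: shiftn_apply)
    ultimately have st: "(x i, y j) \<in> Sym \<times> Sym" unfolding Sym_def by auto
    have "Np (x i) (y j) \<le> (\<Sum>q\<in>Sym \<times> Sym. Np (fst q) (snd q))"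
      using member_le_sum[OF st, of "\<lambda>q. Np (fst q) (snd q)"] finSym by auto
    then have "Np (x i) (y j) \<le> M" by (simp add: M_def)
    then show "\<exists>z\<in>S. z 0 = x i \<and> z (int M) = y j"
      using Np st by blast
  qed
qed

definition windowed :: "nat \<Rightarrow> seq set \<Rightarrow> bool" where
  "windowed m U \<longleftrightarrow> U \<subseteq> S \<and> (\<forall>x\<in>U. \<forall>y\<in>S. (\<forall>i. \<bar>i\<bar> \<le> int m \<longrightarrow> x i = y i) \<longrightarrow> y \<in> U)"

lemma windowed_mono: "windowed m U \<Longrightarrow> m \<le> m' \<Longrightarrow> windowed m' U"
  unfolding windowed_def by (meson dual_order.trans of_nat_le_iff)

lemma windowed_empty: "windowed m {}"
  by (simp add: windowed_def)

lemma windowed_compl: "windowed m U \<Longrightarrow> windowed m (S - U)"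
  unfolding windowed_def by (metis Diff_iff Diff_subset)

lemma windowed_Un: "windowed m U \<Longrightarrow> windowed m V \<Longrightarrow> windowed m (U \<union> V)"
  unfolding windowed_def by blast

lemma windowed_Int: "windowed m U \<Longrightarrow> windowed m V \<Longrightarrow> windowed m (U \<inter> V)"
  unfolding windowed_def by blast

lemma windowed_cyl: "windowed (nat (max \<bar>m\<bar> \<bar>n\<bar>)) (cyl S m n w)"
  unfolding windowed_def
proof (intro conjI ballI impI)
  fix x y assume x: "x \<in> cyl S m n w" and y: "y \<in> S"
    and agree: "\<forall>i. \<bar>i\<bar> \<le> int (nat (max \<bar>m\<bar> \<bar>n\<bar>)) \<longrightarrow> x i = y i"
  have "x i = y i" if "m \<le> i" "i \<le> n" for i
  proof -
    have "\<bar>i\<bar> \<le> int (nat (max \<bar>m\<bar> \<bar>n\<bar>))" using that by linarith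
    then show ?thesis using agree by blast
  qed
  then show "y \<in> cyl S m n w" using x y by (auto simp: cyl_def)
qed (auto simp: cyl_def)

lemma windowed_vimage:
  assumes "\<And>x. x \<in> S \<Longrightarrow> F x \<in> S"
    and "\<And>x y. x \<in> S \<Longrightarrow> y \<in> S \<Longrightarrow> \<forall>i. \<bar>i\<bar> \<le> int m \<longrightarrow> x i = y i \<Longrightarrow>
      \<forall>i. \<bar>i\<bar> \<le> int m \<longrightarrow> F x i = F y i"
    and "windowed m U"
  shows "windowed m (F -` U \<inter> S)"
  unfolding windowed_def
proof (intro conjI ballI impI)
  fix x y assume xy: "x \<in> F -` U \<inter> S" "y \<in> S" "\<forall>i. \<bar>i\<bar> \<le> int m \<longrightarrow> x i = y i"
  then have "F x \<in> U" "F y \<in> S" "\<forall>i. \<bar>i\<bar> \<le> int m \<longrightarrow> F x i = F y i"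
    using assms(1) assms(2)[of x y] by auto
  then have "F y \<in> U" using assms(3) unfolding windowed_def by blast
  then show "y \<in> F -` U \<inter> S" using xy(2) by blast
qed blast

lemma cyl_subset_windowed:
  assumes "windowed m U" "x \<in> U"
  shows "cyl S (- int m) (int m) x \<subseteq> U"
proof
  fix y assume "y \<in> cyl S (- int m) (int m) x"
  then have "y \<in> S" "\<forall>i. \<bar>i\<bar> \<le> int m \<longrightarrow> x i = y i" by (auto simp: cyl_def abs_le_iff)
  then show "y \<in> U" using assms unfolding windowed_def by blast
qed

lemma windowed_cyl_decomposition:
  assumes U: "windowed m U"
  obtains C where "finite C" "C \<subseteq> U" "U = (\<Union>x\<in>C. cyl S (- int m) (int m) x)"
    "\<And>x y. x \<in> C \<Longrightarrow> y \<in> C \<Longrightarrow> x \<noteq> y \<Longrightarrow>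
      cyl S (- int m) (int m) x \<inter> cyl S (- int m) (int m) y = {}"
proof -
  define word where "word x = map x [- int m..int m]" for x :: seq
  have word_eq: "word x = word y \<longleftrightarrow> (\<forall>i. \<bar>i\<bar> \<le> int m \<longrightarrow> x i = y i)" for x y
    by (auto simp: word_def map_eq_conv abs_le_iff)
  define rep where "rep l = (SOME x. x \<in> U \<and> word x = l)" for l
  have rep: "rep (word x) \<in> U \<and> word (rep (word x)) = word x" if "x \<in> U" for x
    unfolding rep_def by (rule someI[of _ x]) (use that in auto)
  define C where "C = rep ` word ` U"
  have "word ` U \<subseteq> {l. set l \<subseteq> {..<k} \<and> length l = length [- int m..int m]}"
  proof
    fix l assume "l \<in> word ` U"
    then obtain x where "x \<in> U" "l = word x" by auto
    moreover from this(1) have "x \<in> S" using U by (auto simp: windowed_def)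
    ultimately show "l \<in> {l. set l \<subseteq> {..<k} \<and> length l = length [- int m..int m]}"
      by (auto simp: word_def SFT_def)
  qed
  then have "finite (word ` U)"
    by (rule finite_subset) (rule finite_lists_length_eq, simp)
  then have "finite C" by (simp add: C_def)
  moreover have "C \<subseteq> U" using rep by (auto simp: C_def)
  moreover have "U = (\<Union>x\<in>C. cyl S (- int m) (int m) x)"
  proof
    show "U \<subseteq> (\<Union>x\<in>C. cyl S (- int m) (int m) x)"
    proof
      fix y assume y: "y \<in> U"
      then have "y \<in> cyl S (- int m) (int m) (rep (word y))"
        using rep[OF y] U word_eq[of "rep (word y)" y] by (auto simp: windowed_def cyl_def)
      then show "y \<in> (\<Union>x\<in>C. cyl S (- int m) (int m) x)" using y by (auto simp: C_def)
    qed
    show "(\<Union>x\<in>C. cyl S (- int m) (int m) x) \<subseteq> U"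
      using cyl_subset_windowed[OF U] \<open>C \<subseteq> U\<close> by blast
  qed
  moreover have "cyl S (- int m) (int m) x \<inter> cyl S (- int m) (int m) y = {}"
    if xy: "x \<in> C" "y \<in> C" "x \<noteq> y" for x y
  proof -
    obtain u v where "u \<in> U" "v \<in> U" "x = rep (word u)" "y = rep (word v)"
      using xy(1,2) by (auto simp: C_def)
    moreover have "word x = word u" "word y = word v"
      using rep[OF \<open>u \<in> U\<close>] rep[OF \<open>v \<in> U\<close>] \<open>x = rep (word u)\<close> \<open>y = rep (word v)\<close> by auto
    ultimately have "word x \<noteq> word y" using \<open>x \<noteq> y\<close> by auto
    then show ?thesis by (auto simp: word_eq cyl_def abs_le_iff)
  qed
  ultimately show ?thesis using that by blast
qed

end

section \<open>Gibbs measures\<close>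

locale gibbs_sft = sft +
  fixes \<mu> :: "seq measure"
  assumes gibbs: "gibbs_measure S \<mu>"
begin

sublocale P: prob_space \<mu>
  using gibbs by (simp add: gibbs_measure_def)

lemma space_eq: "space \<mu> = S"
  and sets_eq: "sets \<mu> = sigma_sets S (cylinders S)"
  and measure_shift_vimage: "B \<in> sets \<mu> \<Longrightarrow> measure \<mu> (shift -` B \<inter> S) = measure \<mu> B"
  using gibbs unfolding gibbs_measure_def by auto

lemma sets_subset_S: "B \<in> sets \<mu> \<Longrightarrow> B \<subseteq> S"
  using sets.sets_into_space space_eq by auto

lemma cyl_in_sets: "cyl S m n w \<in> sets \<mu>"
  unfolding sets_eq by (rule sigma_sets.Basic) (auto simp: cylinders_def)

lemma S_nonempty: "S \<noteq> {}"
  using P.not_empty space_eq by auto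

lemma shiftn_vimage_cyl: "shiftn j -` cyl S m n w \<inter> S = cyl S (m + j) (n + j) (shiftn (- j) w)"
  apply (auto simp: cyl_def shiftn_in_SFT shiftn_apply)
  subgoal for x i by (erule allE[of _ "i - j"]) auto
  done

lemma shiftn_measurable: "shiftn j \<in> measurable \<mu> \<mu>"
proof (rule measurable_sigma_sets[OF sets_eq])
  show "cylinders S \<subseteq> Pow S" by (auto simp: cylinders_def cyl_def)
  show "shiftn j \<in> space \<mu> \<rightarrow> S" by (auto simp: space_eq shiftn_in_SFT)
  fix y assume "y \<in> cylinders S"
  then show "shiftn j -` y \<inter> space \<mu> \<in> sets \<mu>"
    using shiftn_vimage_cyl cyl_in_sets space_eq by (auto simp: cylinders_def)
qed

lemma shiftn_vimage: "B \<in> sets \<mu> \<Longrightarrow> shiftn j -` B \<inter> S \<in> sets \<mu>"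
  using measurable_sets[OF shiftn_measurable] space_eq by auto

lemma measure_shiftn_vimage: "B \<in> sets \<mu> \<Longrightarrow> measure \<mu> (shiftn j -` B \<inter> S) = measure \<mu> B"
proof (induction j arbitrary: B rule: int_induct[where k = 0])
  case base
  then show ?case using sets_subset_S by (simp add: Int_absorb2)
next
  case (step1 j)
  have "shiftn (j + 1) -` B \<inter> S = shift -` (shiftn j -` B \<inter> S) \<inter> S"
    by (auto simp: shift_eq_shiftn shiftn_in_SFT add.commute)
  then show ?case using measure_shift_vimage[OF shiftn_vimage] step1 by simp
next
  case (step2 j)
  have "shift -` (shiftn (j - 1) -` B \<inter> S) \<inter> S = shiftn j -` B \<inter> S"
    by (auto simp: shift_eq_shiftn shiftn_in_SFT)
  then show ?case using measure_shift_vimage[OF shiftn_vimage[OF step2.prems]] step2 by metis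
qed

lemma AE_shiftn:
  assumes "AE x in \<mu>. P x"
  shows "AE z in \<mu>. P (shiftn j z)"
proof -
  obtain N where N: "{x \<in> space \<mu>. \<not> P x} \<subseteq> N" "emeasure \<mu> N = 0" "N \<in> sets \<mu>"
    using assms by (rule AE_E)
  have "shiftn j -` N \<inter> S \<in> null_sets \<mu>"
    using measure_shiftn_vimage[OF N(3)] N(2) shiftn_vimage[OF N(3)]
    by (simp add: P.emeasure_eq_measure null_setsI)
  moreover have "{z \<in> space \<mu>. \<not> P (shiftn j z)} \<subseteq> shiftn j -` N \<inter> S"
    using N(1) by (force simp: space_eq shiftn_in_SFT)
  ultimately show ?thesis by (rule AE_I')
qed

lemma windowed_in_sets: "windowed m U \<Longrightarrow> U \<in> sets \<mu>"
  by (erule windowed_cyl_decomposition) (auto intro: cyl_in_sets)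

lemma gibbs_cylinder_bounds:
  obtains \<phi> P c1 c2 q C where "0 < q" "q < 1" "0 \<le> C" "0 < c1" "0 < c2"
    "\<And>x y r. x \<in> S \<Longrightarrow> y \<in> S \<Longrightarrow> \<forall>j. \<bar>j\<bar> < int r \<longrightarrow> x j = y j \<Longrightarrow> \<bar>\<phi> x - \<phi> y\<bar> \<le> C * q ^ r"
    "\<And>x n. x \<in> S \<Longrightarrow> 1 \<le> n \<Longrightarrow>
      c1 * exp (- real n * P + birkhoff \<phi> n x) \<le> measure \<mu> (cyl S 0 (int n - 1) x)"
    "\<And>x n. x \<in> S \<Longrightarrow> 1 \<le> n \<Longrightarrow>
      measure \<mu> (cyl S 0 (int n - 1) x) \<le> c2 * exp (- real n * P + birkhoff \<phi> n x)"
proof -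
  obtain \<phi> P c1 c2 where "holder S \<phi>" "0 < c1" "0 < c2" and
    G: "\<forall>x\<in>S. \<forall>n\<ge>1.
           c1 * exp (- real n * P + birkhoff \<phi> n x) \<le> measure \<mu> (cyl S 0 (int n - 1) x) \<and>
           measure \<mu> (cyl S 0 (int n - 1) x) \<le> c2 * exp (- real n * P + birkhoff \<phi> n x)"
    using gibbs unfolding gibbs_measure_def by blast
  moreover obtain q C where "0 < q" "q < 1" "0 \<le> C"
    "\<And>x y r. x \<in> S \<Longrightarrow> y \<in> S \<Longrightarrow> \<forall>j. \<bar>j\<bar> < int r \<longrightarrow> x j = y j \<Longrightarrow> \<bar>\<phi> x - \<phi> y\<bar> \<le> C * q ^ r"
    using holder_geometric_bound[OF \<open>holder S \<phi>\<close>] by blast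
  ultimately show ?thesis using that[of q C c1 c2 \<phi> P] by blast
qed

lemma measure_cyl_centered:
  "measure \<mu> (cyl S (- int m) (int m) x) =
    measure \<mu> (cyl S 0 (int (2 * m + 1) - 1) (shiftn (- int m) x))"
  using measure_shiftn_vimage[OF cyl_in_sets, of "- int m" 0 "2 * int m" "shiftn (- int m) x"]
  by (simp add: shiftn_vimage_cyl)

lemma measure_cyl_pos: "x \<in> S \<Longrightarrow> 0 < measure \<mu> (cyl S (- int m) (int m) x)"
proof (rule gibbs_cylinder_bounds)
  fix \<phi> P c1 c2 q C
  assume "0 < c1" and lower: "\<And>x n. x \<in> S \<Longrightarrow> 1 \<le> n \<Longrightarrow>
      c1 * exp (- real n * P + birkhoff \<phi> n x) \<le> measure \<mu> (cyl S 0 (int n - 1) x)"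
  moreover assume "x \<in> S"
  ultimately have
    "0 < c1 * exp (- real (2 * m + 1) * P + birkhoff \<phi> (2 * m + 1) (shiftn (- int m) x))"
    and "c1 * exp (- real (2 * m + 1) * P + birkhoff \<phi> (2 * m + 1) (shiftn (- int m) x))
      \<le> measure \<mu> (cyl S 0 (int (2 * m + 1) - 1) (shiftn (- int m) x))"
    by (simp_all add: lower shiftn_in_SFT del: of_nat_Suc of_nat_add)
  then show ?thesis by (simp only: measure_cyl_centered)
qed

lemma measure_cyl_distortion:
  obtains K where "0 < K"
    "\<And>x x' m. x \<in> S \<Longrightarrow> x' \<in> S \<Longrightarrow> \<forall>i. int L < \<bar>i\<bar> \<longrightarrow> x i = x' i \<Longrightarrow>
      measure \<mu> (cyl S (- int m) (int m) x') \<le> K * measure \<mu> (cyl S (- int m) (int m) x)"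
proof (rule gibbs_cylinder_bounds)
  fix \<phi> P c1 c2 q C
  assume q: "0 < q" "q < 1" "0 \<le> C" "0 < c1" "0 < c2"
    and \<phi>: "\<And>x y r. x \<in> S \<Longrightarrow> y \<in> S \<Longrightarrow> \<forall>j. \<bar>j\<bar> < int r \<longrightarrow> x j = y j \<Longrightarrow>
      \<bar>\<phi> x - \<phi> y\<bar> \<le> C * q ^ r"
    and lower: "\<And>x n. x \<in> S \<Longrightarrow> 1 \<le> n \<Longrightarrow>
      c1 * exp (- real n * P + birkhoff \<phi> n x) \<le> measure \<mu> (cyl S 0 (int n - 1) x)"
    and upper: "\<And>x n. x \<in> S \<Longrightarrow> 1 \<le> n \<Longrightarrow>
      measure \<mu> (cyl S 0 (int n - 1) x) \<le> c2 * exp (- real n * P + birkhoff \<phi> n x)"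
  define H where "H = C / q ^ L * (2 / (1 - q))"
  define K where "K = c2 / c1 * exp H"
  show ?thesis
  proof (rule that)
    show "0 < K" using q by (simp add: K_def)
    fix x x' m
    assume x: "x \<in> S" "x' \<in> S" and agree: "\<forall>i. int L < \<bar>i\<bar> \<longrightarrow> x i = x' i"
    define u where "u = shiftn (- int m) x"
    define u' where "u' = shiftn (- int m) x'"
    define n where "n = 2 * m + 1"
    have u: "u \<in> S" "u' \<in> S" using x by (auto simp: u_def u'_def shiftn_in_SFT)
    have "\<bar>birkhoff \<phi> n u' - birkhoff \<phi> n u\<bar> \<le> H"
      unfolding H_def
      by (rule birkhoff_diff_le_of_agree_outside[OF q(1-3) \<phi> u, where c = m])
        (use agree in \<open>auto simp: u_def u'_def shiftn_apply\<close>)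
    have "measure \<mu> (cyl S (- int m) (int m) x') \<le> c2 * exp (- real n * P + birkhoff \<phi> n u')"
      unfolding measure_cyl_centered u'_def[symmetric] n_def[symmetric]
      by (rule upper[OF u(2)]) (simp add: n_def)
    also have "\<dots> \<le> c2 * exp (- real n * P + birkhoff \<phi> n u + H)"
      using q \<open>\<bar>birkhoff \<phi> n u' - birkhoff \<phi> n u\<bar> \<le> H\<close> by simp
    also have "\<dots> = K * (c1 * exp (- real n * P + birkhoff \<phi> n u))"
      using q by (simp add: K_def exp_add)
    also have "\<dots> \<le> K * measure \<mu> (cyl S (- int m) (int m) x)"
      unfolding measure_cyl_centered u_def[symmetric] n_def[symmetric] using \<open>0 < K\<close>
      by (intro mult_left_mono lower[OF u(1)]) (auto simp: n_def)
    finally show "measure \<mu> (cyl S (- int m) (int m) x') \<le>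
      K * measure \<mu> (cyl S (- int m) (int m) x)" .
  qed
qed

text \<open>Approximation is measured simultaneously for \<open>\<mu>\<close> and for the pull-back of \<open>\<mu>\<close>
  restricted to \<open>Z\<close> along \<open>T\<close>; the latter is what makes it usable for the swap map.\<close>

definition approx_weight :: "(seq \<Rightarrow> seq) \<Rightarrow> seq set \<Rightarrow> seq set \<Rightarrow> real" where
  "approx_weight T Z X = measure \<mu> X + measure \<mu> (T -` X \<inter> Z)"

definition approximable :: "(seq \<Rightarrow> seq) \<Rightarrow> seq set \<Rightarrow> seq set \<Rightarrow> bool" where
  "approximable T Z B \<longleftrightarrow> (\<forall>\<epsilon>>0. \<exists>m U. windowed m U \<and> approx_weight T Z (sym_diff B U) < \<epsilon>)"

context
  fixes T :: "seq \<Rightarrow> seq" and Z :: "seq set"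
  assumes T: "T \<in> measurable \<mu> \<mu>" and Z: "Z \<in> sets \<mu>"
begin

lemma vimage_Int_in_sets: "X \<in> sets \<mu> \<Longrightarrow> T -` X \<inter> Z \<in> sets \<mu>"
proof -
  assume "X \<in> sets \<mu>"
  then have "T -` X \<inter> space \<mu> \<in> sets \<mu>" by (rule measurable_sets[OF T])
  moreover have "T -` X \<inter> Z = (T -` X \<inter> space \<mu>) \<inter> Z"
    using sets.sets_into_space[OF Z] by auto
  ultimately show ?thesis using Z by auto
qed

lemma approx_weight_mono:
  "X \<in> sets \<mu> \<Longrightarrow> Y \<in> sets \<mu> \<Longrightarrow> X \<subseteq> Y \<Longrightarrow> approx_weight T Z X \<le> approx_weight T Z Y"
  unfolding approx_weight_def
  by (intro add_mono P.finite_measure_mono vimage_Int_in_sets) auto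

lemma approx_weight_Un_le:
  assumes "X \<in> sets \<mu>" "Y \<in> sets \<mu>"
  shows "approx_weight T Z (X \<union> Y) \<le> approx_weight T Z X + approx_weight T Z Y"
proof -
  have "T -` (X \<union> Y) \<inter> Z = (T -` X \<inter> Z) \<union> (T -` Y \<inter> Z)" by auto
  then show ?thesis unfolding approx_weight_def
    using measure_Un_le[OF assms]
      measure_Un_le[OF vimage_Int_in_sets[OF assms(1)] vimage_Int_in_sets[OF assms(2)]]
    by simp
qed

lemma approx_weight_decseq:
  assumes "\<And>n. X n \<in> sets \<mu>" "decseq X" "(\<Inter>n. X n) = {}"
  shows "(\<lambda>n. approx_weight T Z (X n)) \<longlonglongrightarrow> 0"
proof -
  have "(\<lambda>n. measure \<mu> (X n)) \<longlonglongrightarrow> measure \<mu> (\<Inter>n. X n)"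
    using assms by (intro P.finite_Lim_measure_decseq) auto
  moreover have "(\<lambda>n. measure \<mu> (T -` X n \<inter> Z)) \<longlonglongrightarrow> measure \<mu> (\<Inter>n. T -` X n \<inter> Z)"
  proof (intro P.finite_Lim_measure_decseq)
    show "decseq (\<lambda>n. T -` X n \<inter> Z)" using assms(2) unfolding decseq_def by blast
  qed (use assms(1) vimage_Int_in_sets in auto)
  moreover have "(\<Inter>n. T -` X n \<inter> Z) = {}" using assms(3) by auto
  ultimately show ?thesis unfolding approx_weight_def using assms(3) tendsto_add by fastforce
qed

lemma approximable_windowed: "windowed m U \<Longrightarrow> approximable T Z U"
  unfolding approximable_def approx_weight_def by (intro allI impI exI[of _ m] exI[of _ U]) auto

lemma approximable_compl:
  assumes "B \<subseteq> S" "approximable T Z B"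
  shows "approximable T Z (S - B)"
  unfolding approximable_def
proof (intro allI impI)
  fix \<epsilon> :: real assume "0 < \<epsilon>"
  then obtain m U where U: "windowed m U" "approx_weight T Z (sym_diff B U) < \<epsilon>"
    using assms(2) unfolding approximable_def by blast
  moreover have "sym_diff (S - B) (S - U) = sym_diff B U"
    using assms(1) U(1) by (auto simp: windowed_def)
  ultimately show "\<exists>m U. windowed m U \<and> approx_weight T Z (sym_diff (S - B) U) < \<epsilon>"
    using windowed_compl by metis
qed

lemma approximable_Un:
  assumes B: "B \<in> sets \<mu>" "B' \<in> sets \<mu>" and "approximable T Z B" "approximable T Z B'"
  shows "approximable T Z (B \<union> B')"
  unfolding approximable_def
proof (intro allI impI)
  fix \<epsilon> :: real assume "0 < \<epsilon>"
  then obtain m U m' U' where U: "windowed m U" "approx_weight T Z (sym_diff B U) < \<epsilon> / 2"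
    and U': "windowed m' U'" "approx_weight T Z (sym_diff B' U') < \<epsilon> / 2"
    using assms(3,4) unfolding approximable_def by (meson half_gt_zero)
  have sets: "sym_diff B U \<in> sets \<mu>" "sym_diff B' U' \<in> sets \<mu>"
    using B windowed_in_sets[OF U(1)] windowed_in_sets[OF U'(1)] by auto
  have "approx_weight T Z (sym_diff (B \<union> B') (U \<union> U')) \<le>
      approx_weight T Z (sym_diff B U \<union> sym_diff B' U')"
    using sets B windowed_in_sets[OF U(1)] windowed_in_sets[OF U'(1)]
    by (intro approx_weight_mono) auto
  also have "\<dots> < \<epsilon>"
    using approx_weight_Un_le[OF sets] U(2) U'(2) by linarith
  finally show "\<exists>m U. windowed m U \<and> approx_weight T Z (sym_diff (B \<union> B') U) < \<epsilon>"
    using windowed_Un[OF windowed_mono[OF U(1)] windowed_mono[OF U'(1)]]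
    by (meson max.cobounded1 max.cobounded2)
qed

lemma approximable_UN:
  fixes X :: "nat \<Rightarrow> seq set"
  assumes X: "\<And>i. X i \<in> sets \<mu>" "\<And>i. approximable T Z (X i)"
  shows "approximable T Z (\<Union>i. X i)"
  unfolding approximable_def
proof (intro allI impI)
  fix \<epsilon> :: real assume "0 < \<epsilon>"
  define Y where "Y N = (\<Union>i<N. X i)" for N
  have Y_sets: "Y N \<in> sets \<mu>" for N using X(1) by (auto simp: Y_def)
  have "approximable T Z (Y N)" for N
  proof (induction N)
    case 0
    then show ?case using approximable_windowed[OF windowed_empty] by (simp add: Y_def)
  next
    case (Suc N)
    have "Y (Suc N) = Y N \<union> X N" by (auto simp: Y_def lessThan_Suc)
    then show ?case using approximable_Un[OF Y_sets X(1) Suc X(2)] by simp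
  qed
  have "(\<lambda>N. approx_weight T Z ((\<Union>i. X i) - Y N)) \<longlonglongrightarrow> 0"
    using X(1) Y_sets by (intro approx_weight_decseq) (auto simp: decseq_def Y_def)
  from LIMSEQ_D[OF this, of "\<epsilon> / 2"] \<open>0 < \<epsilon>\<close>
  obtain N where "\<forall>n\<ge>N. norm (approx_weight T Z ((\<Union>i. X i) - Y n) - 0) < \<epsilon> / 2" by auto
  then have N: "approx_weight T Z ((\<Union>i. X i) - Y N) < \<epsilon> / 2" by auto
  obtain m U where U: "windowed m U" "approx_weight T Z (sym_diff (Y N) U) < \<epsilon> / 2"
    using \<open>approximable T Z (Y N)\<close> \<open>0 < \<epsilon>\<close> unfolding approximable_def by (meson half_gt_zero)
  have sets: "(\<Union>i. X i) - Y N \<in> sets \<mu>" "sym_diff (Y N) U \<in> sets \<mu>"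
    using X(1) Y_sets windowed_in_sets[OF U(1)] by auto
  have "approx_weight T Z (sym_diff (\<Union>i. X i) U) \<le>
      approx_weight T Z (((\<Union>i. X i) - Y N) \<union> sym_diff (Y N) U)"
    using sets X(1) windowed_in_sets[OF U(1)]
    by (intro approx_weight_mono) (auto simp: Y_def)
  also have "\<dots> < \<epsilon>" using approx_weight_Un_le[OF sets] N U(2) by linarith
  finally show "\<exists>m U. windowed m U \<and> approx_weight T Z (sym_diff (\<Union>i. X i) U) < \<epsilon>"
    using U(1) by blast
qed

lemma approximable_sets: "B \<in> sets \<mu> \<Longrightarrow> approximable T Z B"
  unfolding sets_eq
proof (induction rule: sigma_sets.induct)
  case (Basic a)
  then show ?case by (auto simp: cylinders_def intro: approximable_windowed windowed_cyl)
next
  case Empty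
  show ?case by (rule approximable_windowed[OF windowed_empty])
next
  case (Compl a)
  then show ?case using approximable_compl sets_subset_S sets_eq by blast
next
  case (Union X)
  then show ?case using approximable_UN sets_eq by blast
qed

end

lemma windowed_approximation:
  assumes "T \<in> measurable \<mu> \<mu>" "Z \<in> sets \<mu>" "B \<in> sets \<mu>" "0 < \<epsilon>"
  obtains m U where "windowed m U" "measure \<mu> (sym_diff B U) < \<epsilon>"
    "measure \<mu> (T -` sym_diff B U \<inter> Z) < \<epsilon>"
proof -
  obtain m U where "windowed m U" "approx_weight T Z (sym_diff B U) < \<epsilon>"
    using approximable_sets[OF assms(1-3)] assms(4) unfolding approximable_def by blast
  moreover have "0 \<le> measure \<mu> (sym_diff B U)" "0 \<le> measure \<mu> (T -` sym_diff B U \<inter> Z)" by simp_all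
  ultimately show ?thesis
    using that[of m U] unfolding approx_weight_def by linarith
qed

lemma vimage_interval_compl_in_sets:
  fixes g :: "seq \<Rightarrow> real"
  assumes g: "g \<in> borel_measurable \<mu>"
  shows "S - g -` {a..<b} \<in> sets \<mu>"
proof -
  have "S - (g -` {a..<b} \<inter> S) \<in> sets \<mu>"
    using measurable_sets[OF g atLeastLessThan_borel] by (metis sets.compl_sets space_eq)
  moreover have "S - g -` {a..<b} = S - (g -` {a..<b} \<inter> S)" by blast
  ultimately show ?thesis by simp
qed

lemma measure_outside_interval_small:
  fixes g :: "seq \<Rightarrow> real"
  assumes g: "g \<in> borel_measurable \<mu>" and "0 < \<delta>" "0 < \<eta>"
  obtains J :: nat where "measure \<mu> (S - g -` {- real J * \<delta>..<real J * \<delta>}) < \<eta>"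
proof -
  define Out where "Out J = S - g -` {- real J * \<delta>..<real J * \<delta>}" for J :: nat
  have "decseq Out"
  proof (rule decseq_SucI)
    fix J
    have "{- real J * \<delta>..<real J * \<delta>} \<subseteq> {- real (Suc J) * \<delta>..<real (Suc J) * \<delta>}"
      using \<open>0 < \<delta>\<close> by (auto simp: algebra_simps)
    then show "Out (Suc J) \<subseteq> Out J" unfolding Out_def by auto
  qed
  moreover have "(\<Inter>J. Out J) = {}"
  proof (rule equals0I)
    fix x assume x: "x \<in> (\<Inter>J. Out J)"
    obtain J where "\<bar>g x\<bar> / \<delta> < real J" using reals_Archimedean2 by blast
    then have "\<bar>g x\<bar> < real J * \<delta>" using \<open>0 < \<delta>\<close> by (simp add: divide_less_eq)
    moreover have "x \<in> Out J" using x by blast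
    ultimately show False by (auto simp: Out_def abs_less_iff)
  qed
  moreover have "Out J \<in> sets \<mu>" for J
    unfolding Out_def by (rule vimage_interval_compl_in_sets[OF g])
  ultimately have "(\<lambda>J. measure \<mu> (Out J)) \<longlonglongrightarrow> 0"
    using P.finite_Lim_measure_decseq[of Out] by auto
  from LIMSEQ_D[OF this \<open>0 < \<eta>\<close>] obtain J where "\<forall>n\<ge>J. norm (measure \<mu> (Out n) - 0) < \<eta>" by auto
  then show ?thesis using that[of J] by (auto simp: Out_def)
qed

lemma windowed_approximation_finite:
  assumes "finite I" "\<And>i. i \<in> I \<Longrightarrow> B i \<in> sets \<mu>" "0 < \<eta>"
  obtains m U where "\<And>i. i \<in> I \<Longrightarrow> windowed m (U i)"
    "measure \<mu> (\<Union>i\<in>I. sym_diff (B i) (U i)) < \<eta>"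
proof -
  define \<eta>' where "\<eta>' = \<eta> / (real (card I) + 1)"
  have "0 < \<eta>'" using assms(3) by (simp add: \<eta>'_def add_pos_nonneg)
  have "\<forall>i\<in>I. \<exists>mU. windowed (fst mU) (snd mU) \<and> measure \<mu> (sym_diff (B i) (snd mU)) < \<eta>'"
    using windowed_approximation[OF measurable_ident_sets[OF refl] sets.top assms(2) \<open>0 < \<eta>'\<close>]
    by (metis fst_conv snd_conv)
  then obtain mU where mU: "\<And>i. i \<in> I \<Longrightarrow> windowed (fst (mU i)) (snd (mU i))"
    "\<And>i. i \<in> I \<Longrightarrow> measure \<mu> (sym_diff (B i) (snd (mU i))) < \<eta>'" by metis
  show ?thesis
  proof (rule that)
    show "windowed (\<Sum>i\<in>I. fst (mU i)) (snd (mU i))" if "i \<in> I" for i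
      using that assms(1) by (intro windowed_mono[OF mU(1)] member_le_sum) auto
    have "measure \<mu> (\<Union>i\<in>I. sym_diff (B i) (snd (mU i))) \<le> (\<Sum>i\<in>I. \<eta>')"
      using assms(1,2) windowed_in_sets[OF mU(1)] mU(2)
      by (intro order_trans[OF measure_UNION_le sum_mono]) (auto simp: less_imp_le)
    also have "\<dots> < \<eta>" using assms(3) by (simp add: \<eta>'_def field_simps)
    finally show "measure \<mu> (\<Union>i\<in>I. sym_diff (B i) (snd (mU i))) < \<eta>" .
  qed
qed

text \<open>Lusin's theorem for the cylinder topology. Each level set \<open>g\<^sup>-\<^sup>1 [j\<delta>, (j+1)\<delta>)\<close>
  is approximated by a windowed set; off the approximation errors, points with the same
  window lie in the same level set.\<close>

lemma windowed_lusin: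
  fixes g :: "seq \<Rightarrow> real"
  assumes g: "g \<in> borel_measurable \<mu>" and \<delta>: "0 < \<delta>" and \<eta>: "0 < \<eta>"
  obtains Bad m where "Bad \<in> sets \<mu>" "measure \<mu> Bad < \<eta>"
    "\<And>y y'. y \<in> S - Bad \<Longrightarrow> y' \<in> S - Bad \<Longrightarrow> \<forall>i. \<bar>i\<bar> \<le> int m \<longrightarrow> y i = y' i \<Longrightarrow>
      \<bar>g y - g y'\<bar> < \<delta>"
proof -
  obtain J :: nat where J: "measure \<mu> (S - g -` {- real J * \<delta>..<real J * \<delta>}) < \<eta> / 2"
    using measure_outside_interval_small[OF g \<delta>, of "\<eta> / 2"] \<eta> by auto
  define Out where "Out = S - g -` {- real J * \<delta>..<real J * \<delta>}"
  define B where "B j = g -` {real_of_int j * \<delta>..<(real_of_int j + 1) * \<delta>} \<inter> S" for j :: int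
  have B_sets: "B j \<in> sets \<mu>" for j
    using measurable_sets[OF g atLeastLessThan_borel] by (simp add: B_def space_eq)
  obtain m U where U: "\<And>j. j \<in> {- int J..<int J} \<Longrightarrow> windowed m (U j)"
    and small: "measure \<mu> (\<Union>j\<in>{- int J..<int J}. sym_diff (B j) (U j)) < \<eta> / 2"
    by (rule windowed_approximation_finite[where I = "{- int J..<int J}" and B = B and \<eta> = "\<eta> / 2"])
      (use B_sets \<eta> in auto)
  define Bad where "Bad = Out \<union> (\<Union>j\<in>{- int J..<int J}. sym_diff (B j) (U j))"
  have D_sets: "sym_diff (B j) (U j) \<in> sets \<mu>" if "j \<in> {- int J..<int J}" for j
    using B_sets windowed_in_sets[OF U[OF that]] by auto
  have Out_sets: "Out \<in> sets \<mu>" unfolding Out_def by (rule vimage_interval_compl_in_sets[OF g])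
  show ?thesis
  proof (rule that)
    show "Bad \<in> sets \<mu>" using Out_sets D_sets by (auto simp: Bad_def)
    show "measure \<mu> Bad < \<eta>"
      using measure_Un_le[of Out \<mu> "\<Union>j\<in>{- int J..<int J}. sym_diff (B j) (U j)"]
        Out_sets D_sets J small
      by (auto simp: Bad_def Out_def)
  next
    fix y y' assume y: "y \<in> S - Bad" "y' \<in> S - Bad" and agree: "\<forall>i. \<bar>i\<bar> \<le> int m \<longrightarrow> y i = y' i"
    define j where "j = \<lfloor>g y / \<delta>\<rfloor>"
    have "- real J * \<delta> \<le> g y" "g y < real J * \<delta>" using y by (auto simp: Bad_def Out_def)
    then have "- real J \<le> g y / \<delta>" "g y / \<delta> < real J" using \<delta> by (simp_all add: field_simps)
    then have j: "j \<in> {- int J..<int J}" by (simp add: j_def le_floor_iff floor_less_iff)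
    have "real_of_int j \<le> g y / \<delta>" "g y / \<delta> < real_of_int j + 1" unfolding j_def by linarith+
    then have "y \<in> B j" using y \<delta> by (simp add: B_def le_divide_eq divide_less_eq)
    then have "y \<in> U j" using y j by (auto simp: Bad_def)
    then have "y' \<in> U j" using U[OF j] y agree by (auto simp: windowed_def)
    then have "y' \<in> B j" using y j by (auto simp: Bad_def)
    then show "\<bar>g y - g y'\<bar> < \<delta>"
      using \<open>y \<in> B j\<close> by (auto simp: B_def algebra_simps abs_less_iff)
  qed
qed

end

section \<open>Swapping the central block\<close>

locale central_swap = gibbs_sft +
  fixes a b :: seq and L L' :: nat
  assumes a_in_S: "a \<in> S" and b_in_S: "b \<in> S"
    and agree_outside: "\<forall>i. int L < \<bar>i\<bar> \<longrightarrow> a i = b i"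
    and L_less: "L < L'"
begin

definition Za :: "seq set" where
  "Za = cyl S (- int L') (int L') a"

definition swap :: "seq \<Rightarrow> seq" where
  "swap z = (if z \<in> Za then replace_center L b z else z)"

lemma Za_in_sets: "Za \<in> sets \<mu>"
  unfolding Za_def by (rule cyl_in_sets)

lemma Za_subset_S: "Za \<subseteq> S"
  by (auto simp: Za_def cyl_def)

lemma windowed_Za: "windowed L' Za"
  using windowed_cyl[of "- int L'" "int L'" a] by (simp add: Za_def)

lemma measure_Za_pos: "0 < measure \<mu> Za"
  unfolding Za_def by (rule measure_cyl_pos[OF a_in_S])

lemma swap_apply: "z \<in> Za \<Longrightarrow> swap z i = (if \<bar>i\<bar> \<le> int L then b i else z i)"
  by (simp add: swap_def replace_center_def)

lemma swap_in_S: "z \<in> S \<Longrightarrow> swap z \<in> S"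
proof (cases "z \<in> Za")
  case True
  assume "z \<in> S"
  have "z i = a i" if "\<bar>i\<bar> \<le> int L'" for i
    using True that by (auto simp: Za_def cyl_def abs_le_iff)
  moreover have "a (int L + 1) = b (int L + 1)" "a (- int L - 1) = b (- int L - 1)"
    using agree_outside by auto
  ultimately have "b (int L + 1) = z (int L + 1)" "z (- int L - 1) = b (- int L - 1)"
    using L_less by auto
  then show ?thesis
    using True \<open>z \<in> S\<close> b_in_S by (simp add: swap_def replace_center_in_S)
qed (simp add: swap_def)

lemma swap_local:
  assumes "x \<in> S" "y \<in> S" "\<forall>i. \<bar>i\<bar> \<le> int m \<longrightarrow> x i = y i" "L' \<le> m"
  shows "\<forall>i. \<bar>i\<bar> \<le> int m \<longrightarrow> swap x i = swap y i"
proof -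
  have "x \<in> Za \<longleftrightarrow> y \<in> Za" using assms unfolding Za_def cyl_def by auto
  then show ?thesis using assms by (auto simp: swap_def replace_center_def)
qed

lemma windowed_swap_vimage: "windowed m U \<Longrightarrow> L' \<le> m \<Longrightarrow> windowed m (swap -` U \<inter> S)"
  by (rule windowed_vimage) (auto intro: swap_in_S dest: swap_local)

lemma swap_measurable: "swap \<in> measurable \<mu> \<mu>"
proof (rule measurable_sigma_sets[OF sets_eq])
  show "cylinders S \<subseteq> Pow S" by (auto simp: cylinders_def cyl_def)
  show "swap \<in> space \<mu> \<rightarrow> S" using swap_in_S space_eq by auto
  fix y assume "y \<in> cylinders S"
  then obtain m n w where y: "y = cyl S m n w" by (auto simp: cylinders_def)
  have "windowed (max (nat (max \<bar>m\<bar> \<bar>n\<bar>)) L') y"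
    using windowed_mono[OF windowed_cyl] y by auto
  then have "windowed (max (nat (max \<bar>m\<bar> \<bar>n\<bar>)) L') (swap -` y \<inter> S)"
    by (rule windowed_swap_vimage) simp
  then show "swap -` y \<inter> space \<mu> \<in> sets \<mu>" using windowed_in_sets space_eq by auto
qed

lemma swap_vimage_in_sets: "E \<in> sets \<mu> \<Longrightarrow> swap -` E \<inter> Za \<in> sets \<mu>"
proof -
  assume "E \<in> sets \<mu>"
  then have "swap -` E \<inter> space \<mu> \<inter> Za \<in> sets \<mu>"
    using measurable_sets[OF swap_measurable] Za_in_sets by blast
  moreover have "swap -` E \<inter> space \<mu> \<inter> Za = swap -` E \<inter> Za"
    using Za_subset_S space_eq by blast
  ultimately show ?thesis by simp
qed

lemma swap_cyl_disjoint:
  assumes "x \<in> Za" "y \<in> Za"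
    and disj: "cyl S (- int m) (int m) x \<inter> cyl S (- int m) (int m) y = {}"
  shows "cyl S (- int m) (int m) (swap x) \<inter> cyl S (- int m) (int m) (swap y) = {}"
proof -
  have "x \<in> S" using assms(1) Za_subset_S by auto
  then have "x \<notin> cyl S (- int m) (int m) y" using disj by (auto simp: cyl_def)
  then obtain i where i: "\<bar>i\<bar> \<le> int m" "x i \<noteq> y i"
    using \<open>x \<in> S\<close> by (force simp: cyl_def abs_le_iff)
  have "int L < \<bar>i\<bar>"
  proof (rule ccontr)
    assume "\<not> int L < \<bar>i\<bar>"
    then have "- int L' \<le> i \<and> i \<le> int L'" using L_less by auto
    then show False using i(2) assms(1,2) by (simp add: Za_def cyl_def)
  qed
  then have "swap x i \<noteq> swap y i" using i(2) assms(1,2) by (simp add: swap_apply)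
  then show ?thesis using i(1) by (auto simp: cyl_def abs_le_iff)
qed

lemma measure_swap_vimage_windowed:
  assumes U: "windowed m U" and m: "L' \<le> m" and "0 \<le> K"
    and K: "\<And>x x'. x \<in> S \<Longrightarrow> x' \<in> S \<Longrightarrow> \<forall>i. int L < \<bar>i\<bar> \<longrightarrow> x i = x' i \<Longrightarrow>
      measure \<mu> (cyl S (- int m) (int m) x') \<le> K * measure \<mu> (cyl S (- int m) (int m) x)"
  shows "measure \<mu> (swap -` U \<inter> Za) \<le> K * measure \<mu> U"
proof -
  let ?C = "\<lambda>x. cyl S (- int m) (int m) x"
  have "windowed m (swap -` U \<inter> Za)"
    using windowed_Int[OF windowed_swap_vimage[OF U m] windowed_mono[OF windowed_Za m]]
    by (simp add: Int_assoc Int_absorb2[OF Za_subset_S] Int_commute[of S])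
  then obtain C where C: "finite C" "C \<subseteq> swap -` U \<inter> Za" "swap -` U \<inter> Za = (\<Union>z\<in>C. ?C z)"
    and disj: "\<And>x y. x \<in> C \<Longrightarrow> y \<in> C \<Longrightarrow> x \<noteq> y \<Longrightarrow> ?C x \<inter> ?C y = {}"
    by (rule windowed_cyl_decomposition) blast
  have "measure \<mu> (swap -` U \<inter> Za) = (\<Sum>z\<in>C. measure \<mu> (?C z))"
    unfolding C(3) using C(1) disj
    by (intro P.finite_measure_finite_Union) (auto simp: cyl_in_sets disjoint_family_on_def)
  also have "\<dots> \<le> (\<Sum>z\<in>C. K * measure \<mu> (?C (swap z)))"
  proof (rule sum_mono)
    fix z assume "z \<in> C"
    then have "z \<in> Za" "z \<in> S" using C(2) Za_subset_S by auto
    then show "measure \<mu> (?C z) \<le> K * measure \<mu> (?C (swap z))"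
      using K[OF swap_in_S] by (simp add: swap_apply)
  qed
  also have "\<dots> = K * measure \<mu> (\<Union>z\<in>C. ?C (swap z))"
  proof -
    have "disjoint_family_on (\<lambda>z. ?C (swap z)) C"
      unfolding disjoint_family_on_def
    proof (intro ballI impI)
      fix x y assume "x \<in> C" "y \<in> C" "x \<noteq> y"
      then show "?C (swap x) \<inter> ?C (swap y) = {}" using C(2) by (intro swap_cyl_disjoint disj) auto
    qed
    then show ?thesis using C(1)
      by (simp add: sum_distrib_left P.finite_measure_finite_Union cyl_in_sets image_subset_iff)
  qed
  also have "\<dots> \<le> K * measure \<mu> U"
  proof -
    have "(\<Union>z\<in>C. ?C (swap z)) \<subseteq> U" using C(2) cyl_subset_windowed[OF U] by blast
    then show ?thesis using \<open>0 \<le> K\<close> windowed_in_sets[OF U]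
      by (intro mult_left_mono P.finite_measure_mono) auto
  qed
  finally show ?thesis .
qed

lemma swap_nonsingular:
  obtains K where "0 < K" "\<And>E. E \<in> sets \<mu> \<Longrightarrow> measure \<mu> (swap -` E \<inter> Za) \<le> K * measure \<mu> E"
proof -
  obtain K where K: "0 < K" and distortion: "\<And>x x' m. x \<in> S \<Longrightarrow> x' \<in> S \<Longrightarrow>
      \<forall>i. int L < \<bar>i\<bar> \<longrightarrow> x i = x' i \<Longrightarrow>
      measure \<mu> (cyl S (- int m) (int m) x') \<le> K * measure \<mu> (cyl S (- int m) (int m) x)"
    by (rule measure_cyl_distortion[where L = L]) blast
  have "measure \<mu> (swap -` E \<inter> Za) \<le> K * measure \<mu> E" if E: "E \<in> sets \<mu>" for E
  proof (rule field_le_epsilon)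
    fix \<epsilon> :: real assume "0 < \<epsilon>"
    define \<delta> where "\<delta> = \<epsilon> / (K + 1)"
    have "0 < \<delta>" using \<open>0 < \<epsilon>\<close> K by (simp add: \<delta>_def)
    obtain m U where U: "windowed m U" and close: "measure \<mu> (sym_diff E U) < \<delta>"
      "measure \<mu> (swap -` sym_diff E U \<inter> Za) < \<delta>"
      by (rule windowed_approximation[OF swap_measurable Za_in_sets E \<open>0 < \<delta>\<close>])
    have U_sets: "U \<in> sets \<mu>" and D_sets: "sym_diff E U \<in> sets \<mu>"
      using windowed_in_sets[OF U] E by auto
    have "measure \<mu> (swap -` E \<inter> Za) \<le> measure \<mu> ((swap -` U \<inter> Za) \<union> (swap -` sym_diff E U \<inter> Za))"
      by (intro P.finite_measure_mono sets.Un swap_vimage_in_sets U_sets D_sets) auto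
    also have "\<dots> \<le> measure \<mu> (swap -` U \<inter> Za) + measure \<mu> (swap -` sym_diff E U \<inter> Za)"
      by (intro measure_Un_le swap_vimage_in_sets U_sets D_sets)
    also have "measure \<mu> (swap -` U \<inter> Za) \<le> K * measure \<mu> U"
      using K by (intro measure_swap_vimage_windowed[OF windowed_mono[OF U max.cobounded1, of L']]
          distortion) auto
    also have "measure \<mu> U \<le> measure \<mu> E + measure \<mu> (sym_diff E U)"
      using measure_Un_le[OF E D_sets] P.finite_measure_mono[of U "E \<union> sym_diff E U"] E D_sets
      by fastforce
    finally have "measure \<mu> (swap -` E \<inter> Za) \<le> K * (measure \<mu> E + measure \<mu> (sym_diff E U)) + \<delta>"
      using K close(2) by (smt (verit) mult_left_mono)
    also have "\<dots> \<le> K * measure \<mu> E + (K + 1) * \<delta>"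
      using K close(1) by (simp add: algebra_simps)
    also have "(K + 1) * \<delta> = \<epsilon>" using K by (simp add: \<delta>_def)
    finally show "measure \<mu> (swap -` E \<inter> Za) \<le> K * measure \<mu> E + \<epsilon>" .
  qed
  then show ?thesis using K that by blast
qed

lemma exists_swap_pair_avoiding:
  obtains c where "0 < c" "\<And>D. D \<in> sets \<mu> \<Longrightarrow> measure \<mu> D < c \<Longrightarrow> \<exists>z\<in>Za. z \<notin> D \<and> swap z \<notin> D"
proof -
  obtain K where K: "0 < K" "\<And>E. E \<in> sets \<mu> \<Longrightarrow> measure \<mu> (swap -` E \<inter> Za) \<le> K * measure \<mu> E"
    by (rule swap_nonsingular) blast
  show ?thesis
  proof (rule that)
    show "0 < measure \<mu> Za / (1 + K)" using measure_Za_pos K by simp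
    fix D assume D: "D \<in> sets \<mu>" "measure \<mu> D < measure \<mu> Za / (1 + K)"
    have "measure \<mu> (D \<union> (swap -` D \<inter> Za)) \<le> measure \<mu> D + measure \<mu> (swap -` D \<inter> Za)"
      using D(1) swap_vimage_in_sets by (intro measure_Un_le) auto
    also have "\<dots> \<le> (1 + K) * measure \<mu> D" using K(2)[OF D(1)] by (simp add: algebra_simps)
    also have "\<dots> < measure \<mu> Za" using D(2) K by (simp add: field_simps)
    finally have "\<not> Za \<subseteq> D \<union> (swap -` D \<inter> Za)"
      using D(1) swap_vimage_in_sets P.finite_measure_mono by (meson not_le sets.Un)
    then show "\<exists>z\<in>Za. z \<notin> D \<and> swap z \<notin> D" by blast
  qed
qed

text \<open>Lusin's theorem, applied at \<open>\<sigma>\<^sup>n z\<close> and at \<open>\<sigma>\<^sup>n (swap z)\<close>, which agree on a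
  large window once \<open>n\<close> is large.\<close>

lemma exists_swap_pair_far_close:
  fixes g :: "seq \<Rightarrow> real"
  assumes g: "g \<in> borel_measurable \<mu>" and P: "AE x in \<mu>. P x" and "0 < \<delta>"
  obtains N where "\<And>n. N \<le> n \<Longrightarrow> \<exists>z\<in>Za. P z \<and> P (swap z) \<and>
      \<bar>g (shiftn (int n) z) - g (shiftn (int n) (swap z))\<bar> < \<delta> \<and>
      \<bar>g (shiftn (- int n) z) - g (shiftn (- int n) (swap z))\<bar> < \<delta>"
proof -
  obtain c where "0 < c" and avoid: "\<And>D. D \<in> sets \<mu> \<Longrightarrow> measure \<mu> D < c \<Longrightarrow> \<exists>z\<in>Za. z \<notin> D \<and> swap z \<notin> D"
    by (rule exists_swap_pair_avoiding) blast
  obtain Bad m where Bad: "Bad \<in> sets \<mu>" "measure \<mu> Bad < c / 2"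
    and close: "\<And>y y'. y \<in> S - Bad \<Longrightarrow> y' \<in> S - Bad \<Longrightarrow> \<forall>i. \<bar>i\<bar> \<le> int m \<longrightarrow> y i = y' i \<Longrightarrow>
      \<bar>g y - g y'\<bar> < \<delta>"
    by (rule windowed_lusin[OF g \<open>0 < \<delta>\<close>, of "c / 2"]) (use \<open>0 < c\<close> in auto)
  obtain N0 where N0: "{x \<in> space \<mu>. \<not> P x} \<subseteq> N0" "emeasure \<mu> N0 = 0" "N0 \<in> sets \<mu>"
    using P by (rule AE_E)
  show ?thesis
  proof (rule that)
    fix n assume n: "m + L + 1 \<le> n"
    let ?Bn = "\<lambda>j. shiftn j -` Bad \<inter> S"
    define D where "D = N0 \<union> ?Bn (int n) \<union> ?Bn (- int n)"
    have Bn: "?Bn j \<in> sets \<mu>" "measure \<mu> (?Bn j) < c / 2" for j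
      using shiftn_vimage[OF Bad(1)] measure_shiftn_vimage[OF Bad(1)] Bad(2) by auto
    have D_sets: "D \<in> sets \<mu>" using N0(3) Bn(1) by (simp add: D_def)
    have "measure \<mu> D \<le> measure \<mu> (N0 \<union> ?Bn (int n)) + measure \<mu> (?Bn (- int n))"
      unfolding D_def using N0(3) Bn(1) by (intro measure_Un_le) auto
    also have "measure \<mu> (N0 \<union> ?Bn (int n)) \<le> measure \<mu> N0 + measure \<mu> (?Bn (int n))"
      using N0(3) Bn(1) by (intro measure_Un_le)
    finally have "measure \<mu> D < c"
      using N0(2) Bn(2)[of "int n"] Bn(2)[of "- int n"] by (simp add: P.emeasure_eq_measure)
    then obtain z where z: "z \<in> Za" "z \<notin> D" "swap z \<notin> D" using avoid[OF D_sets] by blast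
    have zS: "z \<in> S" "swap z \<in> S" using z(1) Za_subset_S swap_in_S by auto
    have "P z" "P (swap z)" using z(2,3) zS N0(1) space_eq by (auto simp: D_def)
    moreover have "\<bar>g (shiftn j z) - g (shiftn j (swap z))\<bar> < \<delta>" if "j = int n \<or> j = - int n" for j
    proof (rule close)
      show "shiftn j z \<in> S - Bad" "shiftn j (swap z) \<in> S - Bad"
        using z(2,3) zS that by (auto simp: D_def shiftn_in_SFT)
      show "\<forall>i. \<bar>i\<bar> \<le> int m \<longrightarrow> shiftn j z i = shiftn j (swap z) i"
        using that n z(1) by (auto simp: shiftn_apply swap_apply)
    qed
    ultimately show "\<exists>z\<in>Za. P z \<and> P (swap z) \<and>
      \<bar>g (shiftn (int n) z) - g (shiftn (int n) (swap z))\<bar> < \<delta> \<and>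
      \<bar>g (shiftn (- int n) z) - g (shiftn (- int n) (swap z))\<bar> < \<delta>"
      using z(1) by blast
  qed
qed

end

lemma tendsto_abs_diff_le:
  fixes X Y :: "nat \<Rightarrow> real"
  assumes "X \<longlonglongrightarrow> a" "Y \<longlonglongrightarrow> b" "\<And>n. \<bar>X n - Y n\<bar> \<le> \<epsilon>"
  shows "\<bar>a - b\<bar> \<le> \<epsilon>"
proof -
  have "(\<lambda>n. \<bar>X n - Y n\<bar>) \<longlonglongrightarrow> \<bar>a - b\<bar>" using assms(1,2) by (intro tendsto_intros)
  then show ?thesis by (rule LIMSEQ_le_const2) (use assms(3) in auto)
qed

lemma LIMSEQ_I_le:
  fixes X :: "nat \<Rightarrow> real"
  assumes "\<And>\<epsilon>. 0 < \<epsilon> \<Longrightarrow> \<exists>K0. \<forall>K\<ge>K0. \<bar>X K - c\<bar> \<le> \<epsilon>"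
  shows "X \<longlonglongrightarrow> c"
proof (rule LIMSEQ_I)
  fix r :: real assume "0 < r"
  then obtain K0 where "\<forall>K\<ge>K0. \<bar>X K - c\<bar> \<le> r / 2" using assms[of "r / 2"] by auto
  then show "\<exists>K0. \<forall>K\<ge>K0. norm (X K - c) < r" using \<open>0 < r\<close> by force
qed

section \<open>Lipschitz cocycles\<close>

locale lipschitz_cocycle = sft +
  fixes \<theta> :: real and f :: "seq \<Rightarrow> real"
  assumes theta_pos: "0 < \<theta>" and theta_less_1: "\<theta> < 1"
    and lipschitz: "lipschitz_dtheta S \<theta> f"
begin

definition lip_const :: real where
  "lip_const = (SOME C. 0 \<le> C \<and> (\<forall>x\<in>S. \<forall>y\<in>S. \<bar>f x - f y\<bar> \<le> C * d_theta \<theta> x y))"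

lemma lip_const: "0 \<le> lip_const \<and> (\<forall>x\<in>S. \<forall>y\<in>S. \<bar>f x - f y\<bar> \<le> lip_const * d_theta \<theta> x y)"
proof -
  obtain C where C: "\<forall>x\<in>S. \<forall>y\<in>S. \<bar>f x - f y\<bar> \<le> C * d_theta \<theta> x y"
    using lipschitz unfolding lipschitz_dtheta_def by auto
  have bound: "\<bar>f x - f y\<bar> \<le> max C 0 * d_theta \<theta> x y" if "x \<in> S" "y \<in> S" for x y
  proof -
    have "\<bar>f x - f y\<bar> \<le> C * d_theta \<theta> x y" using C that by auto
    also have "\<dots> \<le> max C 0 * d_theta \<theta> x y"
      using d_theta_nonneg[of \<theta> x y] theta_pos by (intro mult_right_mono) auto
    finally show ?thesis .
  qed
  show ?thesis unfolding lip_const_def by (rule someI[of _ "max C 0"]) (use bound in auto)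
qed

lemma lipschitz_shiftn:
  assumes "x \<in> S" "y \<in> S" "\<forall>j. \<bar>j\<bar> < int r \<longrightarrow> x (j + c) = y (j + c)"
  shows "\<bar>f (shiftn c x) - f (shiftn c y)\<bar> \<le> lip_const * \<theta> ^ r"
proof -
  have "\<bar>f (shiftn c x) - f (shiftn c y)\<bar> \<le> lip_const * d_theta \<theta> (shiftn c x) (shiftn c y)"
    using lip_const assms by (simp add: shiftn_in_SFT)
  also have "\<dots> \<le> lip_const * \<theta> ^ r"
    using assms(3) lip_const theta_pos theta_less_1
    by (intro mult_left_mono d_theta_le_power) (auto simp: shiftn_apply)
  finally show ?thesis .
qed

definition fwd_gap :: "nat \<Rightarrow> seq \<Rightarrow> seq \<Rightarrow> real" where
  "fwd_gap n x y = birkhoff f n x - birkhoff f n y"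

definition bwd_gap :: "nat \<Rightarrow> seq \<Rightarrow> seq \<Rightarrow> real" where
  "bwd_gap n x y = birkhoff f n (shiftn (- int n) y) - birkhoff f n (shiftn (- int n) x)"

definition two_sided_birkhoff :: "nat \<Rightarrow> seq \<Rightarrow> real" where
  "two_sided_birkhoff n x = birkhoff f n (shiftn (- int n) x) + birkhoff f n x"

lemma fwd_gap_eq:
  "fwd_gap n x y = bwd_gap n x y + (two_sided_birkhoff n x - two_sided_birkhoff n y)"
  by (simp add: fwd_gap_def bwd_gap_def two_sided_birkhoff_def)

lemma fwd_gap_self [simp]: "fwd_gap n x x = 0"
  by (simp add: fwd_gap_def)

lemma fwd_gap_trans: "fwd_gap n x z = fwd_gap n x y + fwd_gap n y z"
  by (simp add: fwd_gap_def)

text \<open>Each summand is controlled by the Lipschitz bound from whichever side gives the better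
  estimate: the agreement on the central window for small \<open>i\<close>, the asymptoticity of the
  pairs for large \<open>i\<close>.\<close>

lemma lipschitz_sum_stable:
  assumes "0 < \<epsilon>"
  obtains K0 where "\<And>K t x y x' y' n. K0 \<le> K \<Longrightarrow> x \<in> S \<Longrightarrow> y \<in> S \<Longrightarrow> x' \<in> S \<Longrightarrow> y' \<in> S \<Longrightarrow>
    (\<And>i j. i \<le> K \<Longrightarrow> \<bar>j\<bar> < int (K - i) \<Longrightarrow> x' (j + t i) = x (j + t i) \<and> y' (j + t i) = y (j + t i)) \<Longrightarrow>
    (\<And>i j. N \<le> i \<Longrightarrow> \<bar>j\<bar> < int (i - N) \<Longrightarrow> x' (j + t i) = y' (j + t i) \<and> x (j + t i) = y (j + t i)) \<Longrightarrow>
    \<bar>\<Sum>i<n. (f (shiftn (t i) x') - f (shiftn (t i) y')) -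
      (f (shiftn (t i) x) - f (shiftn (t i) y))\<bar> \<le> \<epsilon>"
proof -
  obtain K0 where K0: "\<And>K e n. K0 \<le> K \<Longrightarrow> (\<And>i. i \<le> K \<Longrightarrow> \<bar>e i\<bar> \<le> 2 * lip_const * \<theta> ^ (K - i)) \<Longrightarrow>
    (\<And>i. N \<le> i \<Longrightarrow> \<bar>e i\<bar> \<le> 2 * lip_const * \<theta> ^ (i - N)) \<Longrightarrow> \<bar>\<Sum>i<n. e i\<bar> \<le> \<epsilon>"
    using sum_small_of_two_sided_decay[OF theta_pos theta_less_1 _ assms, of "2 * lip_const" N]
      lip_const by auto
  show ?thesis
  proof (rule that, rule K0)
    fix K t x y x' y' i
    assume S: "x \<in> S" "y \<in> S" "x' \<in> S" "y' \<in> S"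
      and center: "\<And>i j. i \<le> K \<Longrightarrow> \<bar>j\<bar> < int (K - i) \<Longrightarrow>
        x' (j + t i) = x (j + t i) \<and> y' (j + t i) = y (j + t i)"
      and tail: "\<And>i j. N \<le> i \<Longrightarrow> \<bar>j\<bar> < int (i - N) \<Longrightarrow>
        x' (j + t i) = y' (j + t i) \<and> x (j + t i) = y (j + t i)"
    show "\<bar>(f (shiftn (t i) x') - f (shiftn (t i) y')) - (f (shiftn (t i) x) - f (shiftn (t i) y))\<bar>
      \<le> 2 * lip_const * \<theta> ^ (K - i)" if "i \<le> K"
      using lipschitz_shiftn[OF S(3,1)] lipschitz_shiftn[OF S(4,2)] center[OF that] by force
    show "\<bar>(f (shiftn (t i) x') - f (shiftn (t i) y')) - (f (shiftn (t i) x) - f (shiftn (t i) y))\<bar>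
      \<le> 2 * lip_const * \<theta> ^ (i - N)" if "N \<le> i"
      using lipschitz_shiftn[OF S(3,4)] lipschitz_shiftn[OF S(1,2)] tail[OF that] by force
  qed
qed

lemma fwd_gap_stable:
  assumes "0 < \<epsilon>"
  obtains K0 where "\<And>K x y x' y' n. K0 \<le> K \<Longrightarrow> x \<in> S \<Longrightarrow> y \<in> S \<Longrightarrow> x' \<in> S \<Longrightarrow> y' \<in> S \<Longrightarrow>
    \<forall>i. \<bar>i\<bar> \<le> int K \<longrightarrow> x' i = x i \<Longrightarrow> \<forall>i. \<bar>i\<bar> \<le> int K \<longrightarrow> y' i = y i \<Longrightarrow>
    \<forall>i. int N \<le> i \<longrightarrow> x i = y i \<Longrightarrow> \<forall>i. int N \<le> i \<longrightarrow> x' i = y' i \<Longrightarrow>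
    \<bar>fwd_gap n x' y' - fwd_gap n x y\<bar> \<le> \<epsilon>"
proof -
  obtain K0 where K0: "\<And>K t x y x' y' n. K0 \<le> K \<Longrightarrow> x \<in> S \<Longrightarrow> y \<in> S \<Longrightarrow> x' \<in> S \<Longrightarrow> y' \<in> S \<Longrightarrow>
    (\<And>i j. i \<le> K \<Longrightarrow> \<bar>j\<bar> < int (K - i) \<Longrightarrow> x' (j + t i) = x (j + t i) \<and> y' (j + t i) = y (j + t i)) \<Longrightarrow>
    (\<And>i j. N \<le> i \<Longrightarrow> \<bar>j\<bar> < int (i - N) \<Longrightarrow> x' (j + t i) = y' (j + t i) \<and> x (j + t i) = y (j + t i)) \<Longrightarrow>
    \<bar>\<Sum>i<n. (f (shiftn (t i) x') - f (shiftn (t i) y')) -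
      (f (shiftn (t i) x) - f (shiftn (t i) y))\<bar> \<le> \<epsilon>"
    by (rule lipschitz_sum_stable[OF assms]) blast
  show ?thesis
  proof (rule that)
    fix K x y x' y' n
    assume "K0 \<le> K" "x \<in> S" "y \<in> S" "x' \<in> S" "y' \<in> S"
      and "\<forall>i. \<bar>i\<bar> \<le> int K \<longrightarrow> x' i = x i" "\<forall>i. \<bar>i\<bar> \<le> int K \<longrightarrow> y' i = y i"
      and "\<forall>i. int N \<le> i \<longrightarrow> x i = y i" "\<forall>i. int N \<le> i \<longrightarrow> x' i = y' i"
    then have "\<bar>\<Sum>i<n. (f (shiftn (int i) x') - f (shiftn (int i) y')) -
        (f (shiftn (int i) x) - f (shiftn (int i) y))\<bar> \<le> \<epsilon>"
      by (intro K0) auto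
    then show "\<bar>fwd_gap n x' y' - fwd_gap n x y\<bar> \<le> \<epsilon>"
      by (simp add: fwd_gap_def birkhoff_eq_sum sum_subtractf)
  qed
qed

lemma bwd_gap_stable:
  assumes "0 < \<epsilon>"
  obtains K0 where "\<And>K x y x' y' n. K0 \<le> K \<Longrightarrow> x \<in> S \<Longrightarrow> y \<in> S \<Longrightarrow> x' \<in> S \<Longrightarrow> y' \<in> S \<Longrightarrow>
    \<forall>i. \<bar>i\<bar> \<le> int K \<longrightarrow> x' i = x i \<Longrightarrow> \<forall>i. \<bar>i\<bar> \<le> int K \<longrightarrow> y' i = y i \<Longrightarrow>
    \<forall>i. i \<le> - int N \<longrightarrow> x i = y i \<Longrightarrow> \<forall>i. i \<le> - int N \<longrightarrow> x' i = y' i \<Longrightarrow>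
    \<bar>bwd_gap n x' y' - bwd_gap n x y\<bar> \<le> \<epsilon>"
proof -
  obtain K0 where K0: "\<And>K t x y x' y' n. K0 \<le> K \<Longrightarrow> x \<in> S \<Longrightarrow> y \<in> S \<Longrightarrow> x' \<in> S \<Longrightarrow> y' \<in> S \<Longrightarrow>
    (\<And>i j. i \<le> K \<Longrightarrow> \<bar>j\<bar> < int (K - i) \<Longrightarrow> x' (j + t i) = x (j + t i) \<and> y' (j + t i) = y (j + t i)) \<Longrightarrow>
    (\<And>i j. N \<le> i \<Longrightarrow> \<bar>j\<bar> < int (i - N) \<Longrightarrow> x' (j + t i) = y' (j + t i) \<and> x (j + t i) = y (j + t i)) \<Longrightarrow>
    \<bar>\<Sum>i<n. (f (shiftn (t i) x') - f (shiftn (t i) y')) -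
      (f (shiftn (t i) x) - f (shiftn (t i) y))\<bar> \<le> \<epsilon>"
    by (rule lipschitz_sum_stable[OF assms]) blast
  show ?thesis
  proof (rule that)
    fix K x y x' y' n
    assume "K0 \<le> K" "x \<in> S" "y \<in> S" "x' \<in> S" "y' \<in> S"
      and "\<forall>i. \<bar>i\<bar> \<le> int K \<longrightarrow> x' i = x i" "\<forall>i. \<bar>i\<bar> \<le> int K \<longrightarrow> y' i = y i"
      and "\<forall>i. i \<le> - int N \<longrightarrow> x i = y i" "\<forall>i. i \<le> - int N \<longrightarrow> x' i = y' i"
    then have "\<bar>\<Sum>i<n. (f (shiftn (- int i - 1) x') - f (shiftn (- int i - 1) y')) -
        (f (shiftn (- int i - 1) x) - f (shiftn (- int i - 1) y))\<bar> \<le> \<epsilon>"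
      by (intro K0[where t = "\<lambda>i. - int i - 1"]) auto
    then show "\<bar>bwd_gap n x' y' - bwd_gap n x y\<bar> \<le> \<epsilon>"
      by (simp add: bwd_gap_def birkhoff_shiftn_neg sum_subtractf abs_minus_commute)
  qed
qed

lemma two_sided_gap_stable:
  assumes "0 < \<epsilon>"
  obtains L' where "L < L'" "\<And>x y x' y' n. x \<in> S \<Longrightarrow> y \<in> S \<Longrightarrow> x' \<in> S \<Longrightarrow> y' \<in> S \<Longrightarrow>
    \<forall>i. int L < \<bar>i\<bar> \<longrightarrow> x i = y i \<Longrightarrow> \<forall>i. int L < \<bar>i\<bar> \<longrightarrow> x' i = y' i \<Longrightarrow>
    \<forall>i. \<bar>i\<bar> \<le> int L' \<longrightarrow> x' i = x i \<Longrightarrow> \<forall>i. \<bar>i\<bar> \<le> int L' \<longrightarrow> y' i = y i \<Longrightarrow>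
    \<bar>(two_sided_birkhoff n x' - two_sided_birkhoff n y') -
      (two_sided_birkhoff n x - two_sided_birkhoff n y)\<bar> \<le> \<epsilon>"
proof -
  have "0 < \<epsilon> / 2" using assms by simp
  obtain K1 where K1: "\<And>K x y x' y' n. K1 \<le> K \<Longrightarrow> x \<in> S \<Longrightarrow> y \<in> S \<Longrightarrow> x' \<in> S \<Longrightarrow> y' \<in> S \<Longrightarrow>
    \<forall>i. \<bar>i\<bar> \<le> int K \<longrightarrow> x' i = x i \<Longrightarrow> \<forall>i. \<bar>i\<bar> \<le> int K \<longrightarrow> y' i = y i \<Longrightarrow>
    \<forall>i. int (L + 1) \<le> i \<longrightarrow> x i = y i \<Longrightarrow> \<forall>i. int (L + 1) \<le> i \<longrightarrow> x' i = y' i \<Longrightarrow>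
    \<bar>fwd_gap n x' y' - fwd_gap n x y\<bar> \<le> \<epsilon> / 2"
    by (rule fwd_gap_stable[OF \<open>0 < \<epsilon> / 2\<close>]) blast
  obtain K2 where K2: "\<And>K x y x' y' n. K2 \<le> K \<Longrightarrow> x \<in> S \<Longrightarrow> y \<in> S \<Longrightarrow> x' \<in> S \<Longrightarrow> y' \<in> S \<Longrightarrow>
    \<forall>i. \<bar>i\<bar> \<le> int K \<longrightarrow> x' i = x i \<Longrightarrow> \<forall>i. \<bar>i\<bar> \<le> int K \<longrightarrow> y' i = y i \<Longrightarrow>
    \<forall>i. i \<le> - int (L + 1) \<longrightarrow> x i = y i \<Longrightarrow> \<forall>i. i \<le> - int (L + 1) \<longrightarrow> x' i = y' i \<Longrightarrow>
    \<bar>bwd_gap n x' y' - bwd_gap n x y\<bar> \<le> \<epsilon> / 2"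
    by (rule bwd_gap_stable[OF \<open>0 < \<epsilon> / 2\<close>]) blast
  show ?thesis
  proof (rule that[of "max (L + 1) (max K1 K2)"])
    fix x y x' y' n
    assume S: "x \<in> S" "y \<in> S" "x' \<in> S" "y' \<in> S"
      and xy: "\<forall>i. int L < \<bar>i\<bar> \<longrightarrow> x i = y i" and xy': "\<forall>i. int L < \<bar>i\<bar> \<longrightarrow> x' i = y' i"
      and window: "\<forall>i. \<bar>i\<bar> \<le> int (max (L + 1) (max K1 K2)) \<longrightarrow> x' i = x i"
        "\<forall>i. \<bar>i\<bar> \<le> int (max (L + 1) (max K1 K2)) \<longrightarrow> y' i = y i"
    have "\<bar>fwd_gap n x' y' - fwd_gap n x y\<bar> \<le> \<epsilon> / 2"
      by (rule K1[of "max (L + 1) (max K1 K2)"]) (use S xy xy' window in auto)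
    moreover have "\<bar>bwd_gap n x' y' - bwd_gap n x y\<bar> \<le> \<epsilon> / 2"
      by (rule K2[of "max (L + 1) (max K1 K2)"]) (use S xy xy' window in auto)
    ultimately show "\<bar>(two_sided_birkhoff n x' - two_sided_birkhoff n y') -
      (two_sided_birkhoff n x - two_sided_birkhoff n y)\<bar> \<le> \<epsilon>"
      unfolding fwd_gap_eq[of n x' y'] fwd_gap_eq[of n x y] by linarith
  qed simp
qed

lemma fwd_gap_convergent:
  assumes S: "x \<in> S" "y \<in> S" and agree: "\<forall>i. int N \<le> i \<longrightarrow> x i = y i"
  shows "convergent (\<lambda>n. fwd_gap n x y)"
proof -
  define e where "e i = f (shiftn (int i) x) - f (shiftn (int i) y)" for i
  have bound: "norm (e i) \<le> lip_const / \<theta> ^ N * \<theta> ^ i" if "N \<le> i" for i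
  proof -
    have "\<forall>j. \<bar>j\<bar> < int (i - N) \<longrightarrow> x (j + int i) = y (j + int i)" using agree that by auto
    then have "norm (e i) \<le> lip_const * \<theta> ^ (i - N)" using S by (simp add: e_def lipschitz_shiftn)
    also have "\<theta> ^ (i - N) = \<theta> ^ i / \<theta> ^ N" using theta_pos that by (simp add: power_diff)
    finally show ?thesis by simp
  qed
  have "summable (\<lambda>i. lip_const / \<theta> ^ N * \<theta> ^ i)"
    using theta_pos theta_less_1 by (intro summable_mult summable_geometric) simp
  then have "summable e" using bound by (rule summable_comparison_test')
  moreover have "(\<lambda>n. fwd_gap n x y) = (\<lambda>n. \<Sum>i<n. e i)"
    by (simp add: fun_eq_iff fwd_gap_def birkhoff_eq_sum e_def sum_subtractf)
  ultimately show ?thesis by (auto simp: convergent_def dest: summable_LIMSEQ)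
qed

end

section \<open>Measurable coboundaries\<close>

locale coboundary = gibbs_sft k A \<mu> + lipschitz_cocycle k A \<theta> f for k A \<mu> \<theta> f +
  fixes w :: "seq \<Rightarrow> real"
  assumes w_measurable: "w \<in> borel_measurable \<mu>"
    and cohomologous: "AE x in \<mu>. f x = w (shift x) - w x"
begin

definition orbit_coboundary :: "seq \<Rightarrow> bool" where
  "orbit_coboundary z \<longleftrightarrow> (\<forall>i. f (shiftn i z) = w (shiftn (i + 1) z) - w (shiftn i z))"

lemma AE_orbit_coboundary: "AE z in \<mu>. orbit_coboundary z"
  unfolding orbit_coboundary_def AE_all_countable
proof
  fix i :: int
  show "AE z in \<mu>. f (shiftn i z) = w (shiftn (i + 1) z) - w (shiftn i z)"
    using AE_shiftn[OF cohomologous, of i] by (simp add: shift_eq_shiftn add.commute)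
qed

lemma two_sided_birkhoff_telescope:
  assumes "orbit_coboundary z"
  shows "two_sided_birkhoff n z = w (shiftn (int n) z) - w (shiftn (- int n) z)"
proof -
  have "birkhoff f n z = (\<Sum>i<n. w (shiftn (int (Suc i)) z) - w (shiftn (int i) z))"
    unfolding birkhoff_eq_sum using assms
    by (intro sum.cong) (auto simp: orbit_coboundary_def add.commute)
  also have "\<dots> = w (shiftn (int n) z) - w z" by (subst sum_lessThan_telescope) simp
  finally have "birkhoff f n z = w (shiftn (int n) z) - w z" .
  moreover have "birkhoff f n (shiftn (- int n) z) =
      (\<Sum>i<n. w (shiftn (int (Suc i) - int n) z) - w (shiftn (int i - int n) z))"
    unfolding birkhoff_eq_sum using assms
    by (intro sum.cong) (auto simp: orbit_coboundary_def algebra_simps)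
  moreover have "\<dots> = w z - w (shiftn (- int n) z)" by (subst sum_lessThan_telescope) simp
  ultimately show ?thesis by (simp add: two_sided_birkhoff_def)
qed

lemma homoclinic_two_sided_birkhoff_tendsto:
  assumes S: "x \<in> S" "y \<in> S" and "homoclinic x y"
  shows "(\<lambda>n. two_sided_birkhoff n x - two_sided_birkhoff n y) \<longlonglongrightarrow> 0"
proof (rule LIMSEQ_I)
  fix \<epsilon> :: real assume "0 < \<epsilon>"
  obtain L where xy: "\<forall>i. int L < \<bar>i\<bar> \<longrightarrow> x i = y i"
    using \<open>homoclinic x y\<close> by (auto simp: homoclinic_def)
  have "0 < \<epsilon> / 2" using \<open>0 < \<epsilon>\<close> by simp
  obtain L' where "L < L'" and stable: "\<And>x y x' y' n. x \<in> S \<Longrightarrow> y \<in> S \<Longrightarrow> x' \<in> S \<Longrightarrow> y' \<in> S \<Longrightarrow>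
    \<forall>i. int L < \<bar>i\<bar> \<longrightarrow> x i = y i \<Longrightarrow> \<forall>i. int L < \<bar>i\<bar> \<longrightarrow> x' i = y' i \<Longrightarrow>
    \<forall>i. \<bar>i\<bar> \<le> int L' \<longrightarrow> x' i = x i \<Longrightarrow> \<forall>i. \<bar>i\<bar> \<le> int L' \<longrightarrow> y' i = y i \<Longrightarrow>
    \<bar>(two_sided_birkhoff n x' - two_sided_birkhoff n y') -
      (two_sided_birkhoff n x - two_sided_birkhoff n y)\<bar> \<le> \<epsilon> / 2"
    by (rule two_sided_gap_stable[OF \<open>0 < \<epsilon> / 2\<close>, of L]) blast
  interpret central_swap k A \<mu> x y L L'
    by unfold_locales (use S xy \<open>L < L'\<close> in auto)
  obtain N where N: "\<And>n. N \<le> n \<Longrightarrow> \<exists>z\<in>Za. orbit_coboundary z \<and> orbit_coboundary (swap z) \<and>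
      \<bar>w (shiftn (int n) z) - w (shiftn (int n) (swap z))\<bar> < \<epsilon> / 4 \<and>
      \<bar>w (shiftn (- int n) z) - w (shiftn (- int n) (swap z))\<bar> < \<epsilon> / 4"
    using exists_swap_pair_far_close[OF w_measurable AE_orbit_coboundary, of "\<epsilon> / 4"] \<open>0 < \<epsilon>\<close>
    by auto
  have "\<bar>two_sided_birkhoff n x - two_sided_birkhoff n y\<bar> < \<epsilon>" if n: "N \<le> n" for n
  proof -
    obtain z where z: "z \<in> Za" "orbit_coboundary z" "orbit_coboundary (swap z)"
      "\<bar>w (shiftn (int n) z) - w (shiftn (int n) (swap z))\<bar> < \<epsilon> / 4"
      "\<bar>w (shiftn (- int n) z) - w (shiftn (- int n) (swap z))\<bar> < \<epsilon> / 4"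
      using N[OF n] by blast
    have "\<bar>two_sided_birkhoff n z - two_sided_birkhoff n (swap z)\<bar> < \<epsilon> / 2"
      using z(4,5) unfolding two_sided_birkhoff_telescope[OF z(2)]
        two_sided_birkhoff_telescope[OF z(3)] by linarith
    moreover have "z \<in> S" "swap z \<in> S" using z(1) Za_subset_S swap_in_S by auto
    moreover have zx: "\<forall>i. \<bar>i\<bar> \<le> int L' \<longrightarrow> z i = x i"
      using z(1) by (auto simp: Za_def cyl_def abs_le_iff)
    moreover have "\<forall>i. int L < \<bar>i\<bar> \<longrightarrow> z i = swap z i" using z(1) by (simp add: swap_apply)
    moreover have "\<forall>i. \<bar>i\<bar> \<le> int L' \<longrightarrow> swap z i = y i" using z(1) zx xy by (simp add: swap_apply)
    ultimately have "\<bar>(two_sided_birkhoff n z - two_sided_birkhoff n (swap z)) -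
        (two_sided_birkhoff n x - two_sided_birkhoff n y)\<bar> \<le> \<epsilon> / 2"
      using stable[OF S _ _ xy] by blast
    then show ?thesis using \<open>\<bar>two_sided_birkhoff n z - two_sided_birkhoff n (swap z)\<bar> < \<epsilon> / 2\<close>
      by linarith
  qed
  then show "\<exists>N. \<forall>n\<ge>N. norm (two_sided_birkhoff n x - two_sided_birkhoff n y - 0) < \<epsilon>" by auto
qed

end

section \<open>Regularisation and accessibility\<close>

text \<open>\<open>regularize K y\<close> keeps the window \<open>[-K, K]\<close> of \<open>y\<close> and is joined, through
  connecting words of length \<open>M\<close>, to the reference point \<open>p\<close> on both sides.\<close>

locale regularization = lipschitz_cocycle +
  fixes p :: seq and M :: nat
  assumes p_in_S: "p \<in> S" and M_pos: "1 \<le> M"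
    and connect: "\<And>x y i j. x \<in> S \<Longrightarrow> y \<in> S \<Longrightarrow> \<exists>z\<in>S. z 0 = x i \<and> z (int M) = y j"
begin

definition bridge_in :: "nat \<Rightarrow> seq \<Rightarrow> seq" where
  "bridge_in K y = (SOME c. c \<in> S \<and> c 0 = p (- int K - int M) \<and> c (int M) = y (- int K))"

definition bridge_out :: "nat \<Rightarrow> seq \<Rightarrow> seq" where
  "bridge_out K y = (SOME c. c \<in> S \<and> c 0 = y (int K) \<and> c (int M) = p (int K + int M))"

lemma bridge_in:
  assumes "y \<in> S"
  shows "bridge_in K y \<in> S \<and> bridge_in K y 0 = p (- int K - int M) \<and>
    bridge_in K y (int M) = y (- int K)"
proof -
  have "\<exists>c. c \<in> S \<and> c 0 = p (- int K - int M) \<and> c (int M) = y (- int K)"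
    using connect[OF p_in_S assms] by blast
  then show ?thesis unfolding bridge_in_def by (rule someI_ex)
qed

lemma bridge_out:
  assumes "y \<in> S"
  shows "bridge_out K y \<in> S \<and> bridge_out K y 0 = y (int K) \<and>
    bridge_out K y (int M) = p (int K + int M)"
proof -
  have "\<exists>c. c \<in> S \<and> c 0 = y (int K) \<and> c (int M) = p (int K + int M)"
    using connect[OF assms p_in_S] by blast
  then show ?thesis unfolding bridge_out_def by (rule someI_ex)
qed

definition regularize :: "nat \<Rightarrow> seq \<Rightarrow> seq" where
  "regularize K y = glue (- int K - int M) p
     (glue (- int K) (shiftn (int K + int M) (bridge_in K y))
     (glue (int K) y (glue (int K + int M) (shiftn (- int K) (bridge_out K y)) p)))"

lemma regularize_apply: "regularize K y i =
  (if i \<le> - int K - int M then p i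
   else if i \<le> - int K then bridge_in K y (i + int K + int M)
   else if i \<le> int K then y i
   else if i \<le> int K + int M then bridge_out K y (i - int K)
   else p i)"
  by (simp add: regularize_def glue_def shiftn_apply add.assoc)

lemma regularize_in_S:
  assumes y: "y \<in> S"
  shows "regularize K y \<in> S"
proof -
  note a = bridge_in[OF y, of K] and b = bridge_out[OF y, of K]
  define g1 where "g1 = glue (int K + int M) (shiftn (- int K) (bridge_out K y)) p"
  have g1: "g1 \<in> S" unfolding g1_def using b p_in_S
    by (intro glue_in_S shiftn_in_SFT) (auto simp: shiftn_apply)
  define g2 where "g2 = glue (int K) y g1"
  have g2: "g2 \<in> S" unfolding g2_def using g1 y b
    by (intro glue_in_S) (auto simp: g1_def glue_def shiftn_apply)
  define g3 where "g3 = glue (- int K) (shiftn (int K + int M) (bridge_in K y)) g2"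
  have g3: "g3 \<in> S" unfolding g3_def using g2 a
    by (intro glue_in_S shiftn_in_SFT) (auto simp: g2_def g1_def glue_def shiftn_apply)
  have "glue (- int K - int M) p g3 \<in> S" using g3 p_in_S a
    by (intro glue_in_S) (auto simp: g3_def glue_def shiftn_apply)
  then show ?thesis by (simp add: regularize_def g1_def g2_def g3_def)
qed

lemma regularize_center:
  assumes "y \<in> S" "\<bar>i\<bar> \<le> int K"
  shows "regularize K y i = y i"
proof (cases "i = - int K")
  case True
  then show ?thesis using bridge_in[OF assms(1), of K] M_pos by (simp add: regularize_apply)
next
  case False
  then have "\<not> i \<le> - int K - int M" "\<not> i \<le> - int K" "i \<le> int K" using assms(2) M_pos by auto
  then show ?thesis by (simp add: regularize_apply)
qed

lemma regularize_outside:
  assumes "int K + int M < \<bar>i\<bar>"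
  shows "regularize K y i = p i"
proof (cases "i \<le> - int K - int M")
  case False
  then have "\<not> i \<le> - int K" "\<not> i \<le> int K" "\<not> i \<le> int K + int M" using assms by auto
  then show ?thesis using False by (simp add: regularize_apply)
qed (simp add: regularize_apply)

lemma homoclinic_regularize: "homoclinic (regularize K x) (regularize K y)"
  unfolding homoclinic_def by (intro exI[of _ "K + M"]) (simp add: regularize_outside)

lemma regularize_future:
  assumes agree: "\<forall>i\<ge>N. y i = y' i" and N: "N \<le> int K"
  shows "\<forall>i\<ge>N. regularize K y i = regularize K y' i"
proof (intro allI impI)
  fix i assume i: "N \<le> i"
  have out: "bridge_out K y = bridge_out K y'" using agree N unfolding bridge_out_def by auto
  show "regularize K y i = regularize K y' i"
  proof (cases "N \<le> - int K")
    case True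
    then have "bridge_in K y = bridge_in K y'" using agree unfolding bridge_in_def by auto
    then show ?thesis using out agree i by (simp add: regularize_apply)
  next
    case False
    then show ?thesis using out agree i by (simp add: regularize_apply)
  qed
qed

lemma regularize_past:
  assumes agree: "\<forall>i\<le>N. y i = y' i" and N: "- int K \<le> N"
  shows "\<forall>i\<le>N. regularize K y i = regularize K y' i"
proof (intro allI impI)
  fix i assume i: "i \<le> N"
  have "in": "bridge_in K y = bridge_in K y'" using agree N unfolding bridge_in_def by auto
  show "regularize K y i = regularize K y' i"
  proof (cases "int K \<le> N")
    case True
    then have "bridge_out K y = bridge_out K y'" using agree unfolding bridge_out_def by auto
    then show ?thesis using "in" agree i by (simp add: regularize_apply)
  next
    case False
    then show ?thesis using "in" agree i by (simp add: regularize_apply)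
  qed
qed

text \<open>Along a stable or unstable leg, \<open>gap K\<close> recovers the change of the fibre coordinate
  as \<open>K \<rightarrow> \<infinity>\<close>.\<close>

definition gap :: "nat \<Rightarrow> seq \<Rightarrow> seq \<Rightarrow> real" where
  "gap K x y = lim (\<lambda>n. fwd_gap n (regularize K x) (regularize K y))"

lemma fwd_gap_regularize_tendsto:
  assumes "x \<in> S" "y \<in> S"
  shows "(\<lambda>n. fwd_gap n (regularize K x) (regularize K y)) \<longlonglongrightarrow> gap K x y"
proof -
  have "\<forall>i. int (K + M + 1) \<le> i \<longrightarrow> regularize K x i = regularize K y i"
    by (simp add: regularize_outside)
  then show ?thesis unfolding gap_def
    using assms by (intro convergent_LIMSEQ_iff[THEN iffD1] fwd_gap_convergent regularize_in_S)
qed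

lemma gap_self: "x \<in> S \<Longrightarrow> gap K x x = 0"
  using fwd_gap_regularize_tendsto[of x x K] LIMSEQ_unique[OF _ tendsto_const] by simp

lemma gap_trans: "x \<in> S \<Longrightarrow> y \<in> S \<Longrightarrow> z \<in> S \<Longrightarrow> gap K x z = gap K x y + gap K y z"
proof -
  assume S: "x \<in> S" "y \<in> S" "z \<in> S"
  have "(\<lambda>n. fwd_gap n (regularize K x) (regularize K z)) \<longlonglongrightarrow> gap K x y + gap K y z"
    using tendsto_add[OF fwd_gap_regularize_tendsto[OF S(1,2), of K]
        fwd_gap_regularize_tendsto[OF S(2,3), of K]]
    unfolding fwd_gap_trans[symmetric] .
  then show ?thesis using fwd_gap_regularize_tendsto[OF S(1,3)] LIMSEQ_unique by blast
qed

lemma gap_tendsto_stable: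
  assumes y: "y \<in> S" and "(y', s) \<in> Ws S f (y, r)"
  shows "y' \<in> S \<and> (\<lambda>K. gap K y y') \<longlonglongrightarrow> s - r"
proof -
  obtain N0 where y': "y' \<in> S" and agree0: "\<forall>i\<ge>N0. y' i = y i"
    and lim: "(\<lambda>n. fwd_gap n y y') \<longlonglongrightarrow> s - r"
    using assms(2) unfolding Ws_def fwd_gap_def by auto
  define N where "N = nat (max N0 0)"
  have agree: "\<forall>i\<ge>int N. y i = y' i" using agree0 by (auto simp: N_def)
  have "(\<lambda>K. gap K y y') \<longlonglongrightarrow> s - r"
  proof (rule LIMSEQ_I_le)
    fix \<epsilon> :: real assume "0 < \<epsilon>"
    obtain K0 where K0: "\<And>K x y x' y' n. K0 \<le> K \<Longrightarrow> x \<in> S \<Longrightarrow> y \<in> S \<Longrightarrow> x' \<in> S \<Longrightarrow> y' \<in> S \<Longrightarrow>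
      \<forall>i. \<bar>i\<bar> \<le> int K \<longrightarrow> x' i = x i \<Longrightarrow> \<forall>i. \<bar>i\<bar> \<le> int K \<longrightarrow> y' i = y i \<Longrightarrow>
      \<forall>i. int N \<le> i \<longrightarrow> x i = y i \<Longrightarrow> \<forall>i. int N \<le> i \<longrightarrow> x' i = y' i \<Longrightarrow>
      \<bar>fwd_gap n x' y' - fwd_gap n x y\<bar> \<le> \<epsilon>"
      by (rule fwd_gap_stable[OF \<open>0 < \<epsilon>\<close>]) blast
    have "\<bar>gap K y y' - (s - r)\<bar> \<le> \<epsilon>" if K: "max K0 N \<le> K" for K
    proof (rule tendsto_abs_diff_le[OF fwd_gap_regularize_tendsto[OF y y'] lim])
      fix n
      show "\<bar>fwd_gap n (regularize K y) (regularize K y') - fwd_gap n y y'\<bar> \<le> \<epsilon>"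
        using K y y' agree regularize_future[OF agree, of K]
        by (intro K0) (auto simp: regularize_in_S regularize_center)
    qed
    then show "\<exists>K0. \<forall>K\<ge>K0. \<bar>gap K y y' - (s - r)\<bar> \<le> \<epsilon>" by blast
  qed
  with y' show ?thesis by blast
qed

lemma gap_tendsto_unstable:
  assumes vanish: "\<And>a b. a \<in> S \<Longrightarrow> b \<in> S \<Longrightarrow> homoclinic a b \<Longrightarrow>
      (\<lambda>n. two_sided_birkhoff n a - two_sided_birkhoff n b) \<longlonglongrightarrow> 0"
    and y: "y \<in> S" and "(y', s) \<in> Wu S f (y, r)"
  shows "y' \<in> S \<and> (\<lambda>K. gap K y y') \<longlonglongrightarrow> s - r"
proof -
  obtain N0 where y': "y' \<in> S" and agree0: "\<forall>i\<le>N0. y' i = y i"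
    and lim: "(\<lambda>n. bwd_gap n y y') \<longlonglongrightarrow> s - r"
    using assms(3) unfolding Wu_def bwd_gap_def by auto
  define N where "N = nat (max (- N0) 0)"
  have agree: "\<forall>i\<le>- int N. y i = y' i" using agree0 by (auto simp: N_def)
  have bwd_lim: "(\<lambda>n. bwd_gap n (regularize K y) (regularize K y')) \<longlonglongrightarrow> gap K y y'" for K
  proof -
    have "(\<lambda>n. fwd_gap n (regularize K y) (regularize K y') -
        (two_sided_birkhoff n (regularize K y) - two_sided_birkhoff n (regularize K y')))
        \<longlonglongrightarrow> gap K y y' - 0"
      using y y'
      by (intro tendsto_diff fwd_gap_regularize_tendsto vanish regularize_in_S homoclinic_regularize)
    then show ?thesis by (simp add: fwd_gap_eq)
  qed
  have "(\<lambda>K. gap K y y') \<longlonglongrightarrow> s - r"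
  proof (rule LIMSEQ_I_le)
    fix \<epsilon> :: real assume "0 < \<epsilon>"
    obtain K0 where K0: "\<And>K x y x' y' n. K0 \<le> K \<Longrightarrow> x \<in> S \<Longrightarrow> y \<in> S \<Longrightarrow> x' \<in> S \<Longrightarrow> y' \<in> S \<Longrightarrow>
      \<forall>i. \<bar>i\<bar> \<le> int K \<longrightarrow> x' i = x i \<Longrightarrow> \<forall>i. \<bar>i\<bar> \<le> int K \<longrightarrow> y' i = y i \<Longrightarrow>
      \<forall>i. i \<le> - int N \<longrightarrow> x i = y i \<Longrightarrow> \<forall>i. i \<le> - int N \<longrightarrow> x' i = y' i \<Longrightarrow>
      \<bar>bwd_gap n x' y' - bwd_gap n x y\<bar> \<le> \<epsilon>"
      by (rule bwd_gap_stable[OF \<open>0 < \<epsilon>\<close>]) blast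
    have "\<bar>gap K y y' - (s - r)\<bar> \<le> \<epsilon>" if K: "max K0 N \<le> K" for K
    proof (rule tendsto_abs_diff_le[OF bwd_lim lim])
      fix n
      show "\<bar>bwd_gap n (regularize K y) (regularize K y') - bwd_gap n y y'\<bar> \<le> \<epsilon>"
        using K y y' agree regularize_past[OF agree, of K]
        by (intro K0) (auto simp: regularize_in_S regularize_center)
    qed
    then show "\<exists>K0. \<forall>K\<ge>K0. \<bar>gap K y y' - (s - r)\<bar> \<le> \<epsilon>" by blast
  qed
  with y' show ?thesis by blast
qed

lemma gap_tendsto_accessibility_chain:
  assumes vanish: "\<And>a b. a \<in> S \<Longrightarrow> b \<in> S \<Longrightarrow> homoclinic a b \<Longrightarrow>
      (\<lambda>n. two_sided_birkhoff n a - two_sided_birkhoff n b) \<longlonglongrightarrow> 0"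
    and chain: "(\<lambda>a b. b \<in> Ws S f a \<union> Wu S f a)\<^sup>*\<^sup>* q q'" and "fst q \<in> S"
  shows "fst q' \<in> S \<and> (\<lambda>K. gap K (fst q) (fst q')) \<longlonglongrightarrow> snd q' - snd q"
  using chain
proof (induction rule: rtranclp_induct)
  case base
  then show ?case using \<open>fst q \<in> S\<close> gap_self by simp
next
  case (step q1 q2)
  then have S: "fst q1 \<in> S" and lim1: "(\<lambda>K. gap K (fst q) (fst q1)) \<longlonglongrightarrow> snd q1 - snd q" by auto
  have "fst q2 \<in> S \<and> (\<lambda>K. gap K (fst q1) (fst q2)) \<longlonglongrightarrow> snd q2 - snd q1"
    using step(2) gap_tendsto_stable[OF S] gap_tendsto_unstable[OF vanish S]
    by (cases q1, cases q2) auto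
  moreover have "gap K (fst q) (fst q2) = gap K (fst q) (fst q1) + gap K (fst q1) (fst q2)" for K
    using \<open>fst q \<in> S\<close> S calculation by (intro gap_trans) auto
  ultimately show ?case using tendsto_add[OF lim1] by fastforce
qed

end

lemma (in lipschitz_cocycle) not_accessible:
  assumes mixing: "topologically_mixing S" and "S \<noteq> {}"
    and vanish: "\<And>a b. a \<in> S \<Longrightarrow> b \<in> S \<Longrightarrow> homoclinic a b \<Longrightarrow>
      (\<lambda>n. two_sided_birkhoff n a - two_sided_birkhoff n b) \<longlonglongrightarrow> 0"
  shows "\<not> accessible S f"
proof
  assume acc: "accessible S f"
  obtain M where "1 \<le> M" and connect: "\<And>x y i j. x \<in> S \<Longrightarrow> y \<in> S \<Longrightarrow> \<exists>z\<in>S. z 0 = x i \<and> z (int M) = y j"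
    by (rule mixing_connecting_time[OF mixing]) blast
  obtain p where p: "p \<in> S" using \<open>S \<noteq> {}\<close> by blast
  interpret regularization k A \<theta> f p M
    by unfold_locales (use p \<open>1 \<le> M\<close> connect in auto)
  have "(\<lambda>a b. b \<in> Ws S f a \<union> Wu S f a)\<^sup>*\<^sup>* (p, 0) (p, 1)"
    using acc p unfolding accessible_def by auto
  then have "(\<lambda>K. gap K p p) \<longlonglongrightarrow> 1"
    using gap_tendsto_accessibility_chain[OF vanish] p by fastforce
  moreover have "(\<lambda>K. gap K p p) \<longlonglongrightarrow> 0" using gap_self[OF p] by simp
  ultimately show False using LIMSEQ_unique by fastforce
qed

theorem lemma3p1:
  fixes k :: nat and A :: "nat \<Rightarrow> nat \<Rightarrow> bool" and \<mu> :: "seq measure"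
    and \<theta> :: real and f :: "seq \<Rightarrow> real"
  assumes "topologically_mixing (SFT k A)"
    and "gibbs_measure (SFT k A) \<mu>"
    and "0 < \<theta>" and "\<theta> < 1"
    and "lipschitz_dtheta (SFT k A) \<theta> f"
    and "integral\<^sup>L \<mu> f = 0"
    and "accessible (SFT k A) f"
  shows "\<not> (\<exists>w. w \<in> borel_measurable \<mu> \<and> (AE x in \<mu>. f x = w (shift x) - w x))"
proof
  assume "\<exists>w. w \<in> borel_measurable \<mu> \<and> (AE x in \<mu>. f x = w (shift x) - w x)"
  then obtain w where "w \<in> borel_measurable \<mu>" "AE x in \<mu>. f x = w (shift x) - w x" by blast
  then interpret coboundary k A \<mu> \<theta> f w
    using assms by unfold_locales auto
  have "\<not> accessible S f"
    using not_accessible[OF assms(1) S_nonempty homoclinic_two_sided_birkhoff_tendsto] by blast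
  then show False using assms(7) by contradiction
qed

end
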